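(* For any projection algebra $P$ there is a unique (up to isomorphism) projection-generated fundamental DRC-semigroup with projection algebra (isomorphic to) $P$, namely $\mathbb M(P)\cong\mathbb F(P)/\mu_{\mathbb F(P)}$.
   Context: Maps are written on the right and composed left to right. A projection algebra is a set $P$ with maps $\theta_p,\delta_p:P\to P$ ($p\in P$) such that for all $p,q$: $p\theta_p=p$, $p\delta_p=p$; $p\theta_{q\theta_p}=q\theta_p$, $p\delta_{q\delta_p}=q\delta_p$; $\theta_q\theta_{q\theta_p}=\theta_q\theta_p$, $\delta_q\delta_{q\delta_p}=\delta_q\delta_p$; $\theta_p\delta_p=\theta_p$, $\delta_p\theta_p=\delta_p$; $\theta_{p\delta_q}\theta_p=\theta_q\theta_p$, $\delta_{p\theta_q}\delta_p=\delta_q\delta_p$. Write $p\,\mathscr F\,q$ iff $p=q\delta_p$ and $q=p\theta_q$. A DRC-semigroup is $(S,\cdot,D,R)$, $(S,\cdot)$ a semigroup, $D,R:S\to S$ with, for all $a,b$: $D(a)a=a$, $aR(a)=a$; $D(ab)=D(aD(b))$, $R(ab)=R(R(a)b)$; $D(ab)=D(a)D(ab)D(a)$, $R(ab)=R(b)R(ab)R(b)$; $R(D(a))=D(a)$, $D(R(a))=R(a)$. Its projections $\mathbf P(S)=\{D(a):a\in S\}$ form a projection algebra with $q\theta_p=R(qp)$, $q\delta_p=D(pq)$; $S$ is projection-generated if generated as a semigroup by $\mathbf P(S)$. A congruence on $S$ is a semigroup congruence $\sigma$ with $a\,\sigma\,b\Rightarrow D(a)\,\sigma\,D(b)$ and $R(a)\,\sigma\,R(b)$;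 it is projection-separating if $p\,\sigma\,q\Rightarrow p=q$ for projections. $\mu_S$ denotes the maximum projection-separating congruence, and $S$ is fundamental if $\mu_S$ is equality. $\mathbb F(P)$ is the semigroup presented by generators $x_p$ ($p\in P$) and relations $x_p^2=x_p$, $x_px_q=x_px_{p\theta_q}$, $x_px_q=x_{q\delta_p}x_q$; every element equals $\overline{x_{p_1}\cdots x_{p_k}}$ for some $p_1\mathscr F\cdots\mathscr F p_k$ (with $p_1,p_k$ determined by the element), and with $D(\overline{x_{p_1}\cdots x_{p_k}})=\overline{x_{p_1}}$, $R(\overline{x_{p_1}\cdots x_{p_k}})=\overline{x_{p_k}}$ it is a DRC-semigroup. $\mathbb M(P)$ is the subsemigroup of $\mathcal T_P\times\mathcal T_P^{\mathrm{op}}$ (product $(\alpha,\alpha')(\beta,\beta')=(\alpha\beta,\beta'\alpha')$, $\mathcal T_P$ the full transformation semigroup on $P$) generated by the pairs $\hat p=(\theta_p,\delta_p)$, $p\in P$, with $D(\hat p_1\cdots\hat p_k)=\hat p_1$, $R(\hat p_1\cdots\hat p_k)=\hat p_k$ whenever $p_1\mathscr F\cdots\mathscr F p_k$. *)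

theory Defs
  imports Main "HOL-Library.FuncSet"
begin

text \<open>A projection algebra is given by a carrier P and two binary operations:
  th p q stands for q theta_p (the map theta_p applied to q, maps written on the right),
  de p q stands for q delta_p. Composition theta_q theta_p (first theta_q, then theta_p)
  applied to x is th p (th q x).\<close>

definition proj_alg :: "'p set \<Rightarrow> ('p \<Rightarrow> 'p \<Rightarrow> 'p) \<Rightarrow> ('p \<Rightarrow> 'p \<Rightarrow> 'p) \<Rightarrow> bool" where
  "proj_alg P th de \<longleftrightarrow>
     (\<forall>p\<in>P. \<forall>q\<in>P. th p q \<in> P \<and> de p q \<in> P) \<and>
     (\<forall>p\<in>P. \<forall>q\<in>P.
        th p p = p \<and> de p p = p \<and>
        th (th p q) p = th p q \<and> de (de p q) p = de p q \<and>
        (\<forall>x\<in>P. th (th p q) (th q x) = th p (th q x)) \<and>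
        (\<forall>x\<in>P. de (de p q) (de q x) = de p (de q x)) \<and>
        (\<forall>x\<in>P. de p (th p x) = th p x) \<and>
        (\<forall>x\<in>P. th p (de p x) = de p x) \<and>
        (\<forall>x\<in>P. th p (th (de q p) x) = th p (th q x)) \<and>
        (\<forall>x\<in>P. de p (de (th q p) x) = de p (de q x)))"

definition fF :: "('p \<Rightarrow> 'p \<Rightarrow> 'p) \<Rightarrow> ('p \<Rightarrow> 'p \<Rightarrow> 'p) \<Rightarrow> 'p \<Rightarrow> 'p \<Rightarrow> bool" where
  "fF th de p q \<longleftrightarrow> p = de p q \<and> q = th q p"

definition fchain :: "'p set \<Rightarrow> ('p \<Rightarrow> 'p \<Rightarrow> 'p) \<Rightarrow> ('p \<Rightarrow> 'p \<Rightarrow> 'p) \<Rightarrow> 'p list \<Rightarrow> bool" where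
  "fchain P th de ps \<longleftrightarrow> ps \<noteq> [] \<and> set ps \<subseteq> P \<and>
     (\<forall>i. Suc i < length ps \<longrightarrow> fF th de (ps ! i) (ps ! Suc i))"

definition proj_alg_iso :: "'p set \<Rightarrow> ('p \<Rightarrow> 'p \<Rightarrow> 'p) \<Rightarrow> ('p \<Rightarrow> 'p \<Rightarrow> 'p)
     \<Rightarrow> 'q set \<Rightarrow> ('q \<Rightarrow> 'q \<Rightarrow> 'q) \<Rightarrow> ('q \<Rightarrow> 'q \<Rightarrow> 'q) \<Rightarrow> ('p \<Rightarrow> 'q) \<Rightarrow> bool" where
  "proj_alg_iso P th de Q th' de' f \<longleftrightarrow> bij_betw f P Q \<and>
     (\<forall>p\<in>P. \<forall>q\<in>P. f (th p q) = th' (f p) (f q) \<and> f (de p q) = de' (f p) (f q))"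

record 'a drc =
  drc_carrier :: "'a set"
  drc_mult :: "'a \<Rightarrow> 'a \<Rightarrow> 'a"
  drc_D :: "'a \<Rightarrow> 'a"
  drc_R :: "'a \<Rightarrow> 'a"

definition drc :: "'a drc \<Rightarrow> bool" where
  "drc S \<longleftrightarrow>
    (let C = drc_carrier S; m = drc_mult S; D = drc_D S; R = drc_R S in
     (\<forall>a\<in>C. \<forall>b\<in>C. m a b \<in> C) \<and> (\<forall>a\<in>C. D a \<in> C \<and> R a \<in> C) \<and>
     (\<forall>a\<in>C. \<forall>b\<in>C. \<forall>c\<in>C. m (m a b) c = m a (m b c)) \<and>
     (\<forall>a\<in>C. m (D a) a = a \<and> m a (R a) = a \<and> R (D a) = D a \<and> D (R a) = R a) \<and>
     (\<forall>a\<in>C. \<forall>b\<in>C.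
        D (m a b) = D (m a (D b)) \<and> R (m a b) = R (m (R a) b) \<and>
        D (m a b) = m (m (D a) (D (m a b))) (D a) \<and>
        R (m a b) = m (m (R b) (R (m a b))) (R b)))"

definition projs :: "'a drc \<Rightarrow> 'a set" where
  "projs S = drc_D S ` drc_carrier S"

definition thS :: "'a drc \<Rightarrow> 'a \<Rightarrow> 'a \<Rightarrow> 'a" where
  "thS S p q = drc_R S (drc_mult S q p)"

definition deS :: "'a drc \<Rightarrow> 'a \<Rightarrow> 'a \<Rightarrow> 'a" where
  "deS S p q = drc_D S (drc_mult S p q)"

inductive_set sgen :: "('a \<Rightarrow> 'a \<Rightarrow> 'a) \<Rightarrow> 'a set \<Rightarrow> 'a set" for m X where
  sgen_base: "x \<in> X \<Longrightarrow> x \<in> sgen m X"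
| sgen_mult: "a \<in> sgen m X \<Longrightarrow> b \<in> sgen m X \<Longrightarrow> m a b \<in> sgen m X"

definition proj_generated :: "'a drc \<Rightarrow> bool" where
  "proj_generated S \<longleftrightarrow> drc_carrier S = sgen (drc_mult S) (projs S)"

definition drc_iso :: "'a drc \<Rightarrow> 'b drc \<Rightarrow> ('a \<Rightarrow> 'b) \<Rightarrow> bool" where
  "drc_iso S T f \<longleftrightarrow> bij_betw f (drc_carrier S) (drc_carrier T) \<and>
     (\<forall>a\<in>drc_carrier S. \<forall>b\<in>drc_carrier S.
        f (drc_mult S a b) = drc_mult T (f a) (f b)) \<and>
     (\<forall>a\<in>drc_carrier S. f (drc_D S a) = drc_D T (f a) \<and> f (drc_R S a) = drc_R T (f a))"

definition drc_cong :: "'a drc \<Rightarrow> ('a \<times> 'a) set \<Rightarrow> bool" where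
  "drc_cong S \<sigma> \<longleftrightarrow> equiv (drc_carrier S) \<sigma> \<and>
     (\<forall>(a, b)\<in>\<sigma>. \<forall>c\<in>drc_carrier S.
        (drc_mult S a c, drc_mult S b c) \<in> \<sigma> \<and> (drc_mult S c a, drc_mult S c b) \<in> \<sigma>) \<and>
     (\<forall>(a, b)\<in>\<sigma>. (drc_D S a, drc_D S b) \<in> \<sigma> \<and> (drc_R S a, drc_R S b) \<in> \<sigma>)"

definition proj_separating :: "'a drc \<Rightarrow> ('a \<times> 'a) set \<Rightarrow> bool" where
  "proj_separating S \<sigma> \<longleftrightarrow> (\<forall>p\<in>projs S. \<forall>q\<in>projs S. (p, q) \<in> \<sigma> \<longrightarrow> p = q)"

definition mu :: "'a drc \<Rightarrow> ('a \<times> 'a) set" where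
  "mu S = (THE \<sigma>. drc_cong S \<sigma> \<and> proj_separating S \<sigma> \<and>
             (\<forall>\<tau>. drc_cong S \<tau> \<and> proj_separating S \<tau> \<longrightarrow> \<tau> \<subseteq> \<sigma>))"

definition fundamental :: "'a drc \<Rightarrow> bool" where
  "fundamental S \<longleftrightarrow> mu S = Id_on (drc_carrier S)"

definition quot :: "'a drc \<Rightarrow> ('a \<times> 'a) set \<Rightarrow> 'a set drc" where
  "quot S \<sigma> = \<lparr> drc_carrier = drc_carrier S // \<sigma>,
     drc_mult = (\<lambda>A B. \<sigma> `` {drc_mult S (SOME a. a \<in> A) (SOME b. b \<in> B)}),
     drc_D = (\<lambda>A. \<sigma> `` {drc_D S (SOME a. a \<in> A)}),
     drc_R = (\<lambda>A. \<sigma> `` {drc_R S (SOME a. a \<in> A)}) \<rparr>"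

text \<open>Words are nonempty lists over P; frel is the congruence generated by the
  defining relations x_p x_p = x_p, x_p x_q = x_p x_(p theta_q), x_p x_q = x_(q delta_p) x_q.\<close>
inductive_set frel :: "'p set \<Rightarrow> ('p \<Rightarrow> 'p \<Rightarrow> 'p) \<Rightarrow> ('p \<Rightarrow> 'p \<Rightarrow> 'p) \<Rightarrow> ('p list \<times> 'p list) set"
  for P th de where
  frel_idem: "p \<in> P \<Longrightarrow> ([p, p], [p]) \<in> frel P th de"
| frel_th: "p \<in> P \<Longrightarrow> q \<in> P \<Longrightarrow> ([p, q], [p, th q p]) \<in> frel P th de"
| frel_de: "p \<in> P \<Longrightarrow> q \<in> P \<Longrightarrow> ([p, q], [de p q, q]) \<in> frel P th de"
| frel_refl: "w \<in> lists P \<Longrightarrow> w \<noteq> [] \<Longrightarrow> (w, w) \<in> frel P th de"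
| frel_sym: "(u, v) \<in> frel P th de \<Longrightarrow> (v, u) \<in> frel P th de"
| frel_trans: "(u, v) \<in> frel P th de \<Longrightarrow> (v, w) \<in> frel P th de \<Longrightarrow> (u, w) \<in> frel P th de"
| frel_ctx: "(u, v) \<in> frel P th de \<Longrightarrow> x \<in> lists P \<Longrightarrow> y \<in> lists P \<Longrightarrow>
     (x @ u @ y, x @ v @ y) \<in> frel P th de"

definition Fdrc :: "'p set \<Rightarrow> ('p \<Rightarrow> 'p \<Rightarrow> 'p) \<Rightarrow> ('p \<Rightarrow> 'p \<Rightarrow> 'p) \<Rightarrow> 'p list set drc" where
  "Fdrc P th de = \<lparr> drc_carrier = (lists P - {[]}) // frel P th de,
     drc_mult = (\<lambda>A B. frel P th de `` {(SOME u. u \<in> A) @ (SOME v. v \<in> B)}),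
     drc_D = (\<lambda>A. frel P th de `` {[hd (SOME w. w \<in> A \<and> fchain P th de w)]}),
     drc_R = (\<lambda>A. frel P th de `` {[last (SOME w. w \<in> A \<and> fchain P th de w)]}) \<rparr>"

text \<open>Transformations of P are represented as functions extensional outside P;
  composition is left to right.\<close>
definition tcomp :: "'p set \<Rightarrow> ('p \<Rightarrow> 'p) \<Rightarrow> ('p \<Rightarrow> 'p) \<Rightarrow> ('p \<Rightarrow> 'p)" where
  "tcomp P \<alpha> \<beta> = (\<lambda>x\<in>P. \<beta> (\<alpha> x))"

definition Mmult :: "'p set \<Rightarrow> ('p \<Rightarrow> 'p) \<times> ('p \<Rightarrow> 'p) \<Rightarrow> ('p \<Rightarrow> 'p) \<times> ('p \<Rightarrow> 'p)
     \<Rightarrow> ('p \<Rightarrow> 'p) \<times> ('p \<Rightarrow> 'p)" where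
  "Mmult P a b = (tcomp P (fst a) (fst b), tcomp P (snd b) (snd a))"

definition hatp :: "'p set \<Rightarrow> ('p \<Rightarrow> 'p \<Rightarrow> 'p) \<Rightarrow> ('p \<Rightarrow> 'p \<Rightarrow> 'p) \<Rightarrow> 'p
     \<Rightarrow> ('p \<Rightarrow> 'p) \<times> ('p \<Rightarrow> 'p)" where
  "hatp P th de p = ((\<lambda>x\<in>P. th p x), (\<lambda>x\<in>P. de p x))"

fun hprod :: "'p set \<Rightarrow> ('p \<Rightarrow> 'p \<Rightarrow> 'p) \<Rightarrow> ('p \<Rightarrow> 'p \<Rightarrow> 'p) \<Rightarrow> 'p list
     \<Rightarrow> ('p \<Rightarrow> 'p) \<times> ('p \<Rightarrow> 'p)" where
  "hprod P th de [] = undefined"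
| "hprod P th de [p] = hatp P th de p"
| "hprod P th de (p # q # ps) = Mmult P (hatp P th de p) (hprod P th de (q # ps))"

definition Mdrc :: "'p set \<Rightarrow> ('p \<Rightarrow> 'p \<Rightarrow> 'p) \<Rightarrow> ('p \<Rightarrow> 'p \<Rightarrow> 'p)
     \<Rightarrow> (('p \<Rightarrow> 'p) \<times> ('p \<Rightarrow> 'p)) drc" where
  "Mdrc P th de = \<lparr> drc_carrier = sgen (Mmult P) (hatp P th de ` P),
     drc_mult = Mmult P,
     drc_D = (\<lambda>a. hatp P th de (hd (SOME ps. fchain P th de ps \<and> hprod P th de ps = a))),
     drc_R = (\<lambda>a. hatp P th de (last (SOME ps. fchain P th de ps \<and> hprod P th de ps = a))) \<rparr>"

end

theory Submission
  imports Defs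
begin

text \<open>
  Modulo the defining relations of F(P), every word is equivalent to an F-chain p1 F ... F pk:
  a letter q following r is replaced by t s, where s = r theta_q and t = s delta_r F s; as t lies
  below r, the factor r t collapses to t, and this restriction is pushed back along the chain. The pair of maps in M(P) given by such a chain has pk and p1 as
  greatest values of its two components, so D and R of M(P) do not depend on the chain, and
  M(P) is a projection-generated DRC-semigroup with projection algebra P via p \<mapsto> hat p.

  An element a of M(P) is determined by the projections R(hat x a) = hat (x a1) and
  D(a hat x) = hat (x a2). Therefore, for a DRC-semigroup S whose projection algebra is
  identified with P, the action of S on its projections is a homomorphism to M(P) whose kernel
  is exactly mu_S. For S = M(P) the kernel is trivial, so M(P) is fundamental; for S = F(P) the
  action is onto, so F(P)/mu is M(P); for S projection-generated and fundamental it is an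
  isomorphism onto M(P).
\<close>

section \<open>Homomorphisms, kernels and quotients of DRC-structures\<close>

definition drc_closed :: "'a drc \<Rightarrow> bool" where
  "drc_closed S \<longleftrightarrow>
     (\<forall>a\<in>drc_carrier S. \<forall>b\<in>drc_carrier S. drc_mult S a b \<in> drc_carrier S) \<and>
     (\<forall>a\<in>drc_carrier S. drc_D S a \<in> drc_carrier S \<and> drc_R S a \<in> drc_carrier S)"

definition drc_hom :: "'a drc \<Rightarrow> 'b drc \<Rightarrow> ('a \<Rightarrow> 'b) \<Rightarrow> bool" where
  "drc_hom S T f \<longleftrightarrow>
     (\<forall>a\<in>drc_carrier S. \<forall>b\<in>drc_carrier S. f (drc_mult S a b) = drc_mult T (f a) (f b)) \<and>
     (\<forall>a\<in>drc_carrier S. f (drc_D S a) = drc_D T (f a) \<and> f (drc_R S a) = drc_R T (f a))"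

definition ker_rel :: "'a drc \<Rightarrow> ('a \<Rightarrow> 'b) \<Rightarrow> ('a \<times> 'a) set" where
  "ker_rel S f = {(a, b). a \<in> drc_carrier S \<and> b \<in> drc_carrier S \<and> f a = f b}"

lemma drc_iso_iff_hom_bij:
  "drc_iso S T f \<longleftrightarrow> drc_hom S T f \<and> bij_betw f (drc_carrier S) (drc_carrier T)"
  unfolding drc_iso_def drc_hom_def by blast

lemma drc_closed_if_drc: "drc S \<Longrightarrow> drc_closed S"
  unfolding drc_def drc_closed_def Let_def by blast

lemma equiv_ker_rel: "equiv (drc_carrier S) (ker_rel S f)"
  unfolding ker_rel_def by (rule equivI) (auto simp: refl_on_def sym_def trans_def)

lemma drc_cong_ker_rel: "drc_closed S \<Longrightarrow> drc_hom S T f \<Longrightarrow> drc_cong S (ker_rel S f)"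
  unfolding drc_cong_def using equiv_ker_rel
  by (auto simp: ker_rel_def drc_closed_def drc_hom_def)

lemma proj_separating_ker_rel: "inj_on f (projs S) \<Longrightarrow> proj_separating S (ker_rel S f)"
  unfolding proj_separating_def ker_rel_def inj_on_def by blast

lemma drc_cong_subset: "drc_cong S \<sigma> \<Longrightarrow> \<sigma> \<subseteq> drc_carrier S \<times> drc_carrier S"
  unfolding drc_cong_def equiv_def refl_on_def by blast

lemma mu_eqI:
  assumes "drc_cong S \<sigma>" "proj_separating S \<sigma>"
    and "\<And>\<tau>. drc_cong S \<tau> \<Longrightarrow> proj_separating S \<tau> \<Longrightarrow> \<tau> \<subseteq> \<sigma>"
  shows "mu S = \<sigma>"
  unfolding mu_def using assms by (intro the_equality) blast+

lemma proj_separating_cong_eq: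
  assumes cong: "drc_cong S \<sigma>" and sep: "proj_separating S \<sigma>"
    and ab: "(a, b) \<in> \<sigma>" and c: "c \<in> drc_carrier S"
    and R_projs: "\<And>x. x \<in> drc_carrier S \<Longrightarrow> drc_R S x \<in> projs S"
  shows "drc_R S (drc_mult S c a) = drc_R S (drc_mult S c b)"
    and "drc_D S (drc_mult S a c) = drc_D S (drc_mult S b c)"
proof -
  have "(drc_R S (drc_mult S c a), drc_R S (drc_mult S c b)) \<in> \<sigma>"
    using cong ab c unfolding drc_cong_def by fast
  moreover have "(drc_mult S c a, drc_mult S c b) \<in> \<sigma>"
    using cong ab c unfolding drc_cong_def by fast
  ultimately show "drc_R S (drc_mult S c a) = drc_R S (drc_mult S c b)"
    using sep R_projs drc_cong_subset[OF cong] unfolding proj_separating_def by blast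
next
  have "(drc_D S (drc_mult S a c), drc_D S (drc_mult S b c)) \<in> \<sigma>"
    using cong ab c unfolding drc_cong_def by fast
  moreover have "(drc_mult S a c, drc_mult S b c) \<in> \<sigma>"
    using cong ab c unfolding drc_cong_def by fast
  ultimately show "drc_D S (drc_mult S a c) = drc_D S (drc_mult S b c)"
    using sep drc_cong_subset[OF cong] unfolding proj_separating_def projs_def by blast
qed

lemma quotient_class_eq: "equiv A r \<Longrightarrow> X \<in> A // r \<Longrightarrow> a \<in> X \<Longrightarrow> X = r `` {a}"
  by (metis equiv_class_eq quotientE Image_singleton_iff)

lemma some_in_quotient: "equiv A r \<Longrightarrow> X \<in> A // r \<Longrightarrow> (SOME a. a \<in> X) \<in> X"
  by (metis in_quotient_imp_non_empty some_in_eq)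

lemma some_in_quotient_carrier: "equiv A r \<Longrightarrow> X \<in> A // r \<Longrightarrow> (SOME a. a \<in> X) \<in> A"
  using some_in_quotient in_quotient_imp_subset by blast

lemma drc_closed_quot:
  assumes "equiv (drc_carrier S) \<sigma>" "drc_closed S"
  shows "drc_closed (quot S \<sigma>)"
  using assms some_in_quotient_carrier[OF assms(1)]
  unfolding drc_closed_def quot_def by (auto intro: quotientI)

definition induced_map :: "('a \<Rightarrow> 'b) \<Rightarrow> 'a set \<Rightarrow> 'b" where
  "induced_map f X = f (SOME a. a \<in> X)"

lemma induced_map_class:
  assumes "a \<in> drc_carrier S" shows "induced_map f (ker_rel S f `` {a}) = f a"
proof -
  let ?b = "SOME b. b \<in> ker_rel S f `` {a}"
  have "(a, ?b) \<in> ker_rel S f"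
    using some_in_quotient[OF equiv_ker_rel quotientI[OF assms]] by (simp only: Image_singleton_iff)
  moreover have "\<forall>b. (a, b) \<in> ker_rel S f \<longrightarrow> f b = f a" unfolding ker_rel_def by simp
  ultimately show ?thesis unfolding induced_map_def by blast
qed

lemma drc_hom_induced_map:
  assumes closed: "drc_closed S" and hom: "drc_hom S T f"
  shows "drc_hom (quot S (ker_rel S f)) T (induced_map f)"
proof -
  let ?C = "drc_carrier S" and ?K = "ker_rel S f" and ?r = "\<lambda>X. SOME a. a \<in> X"
  have r: "?r X \<in> ?C" if "X \<in> ?C // ?K" for X
    using some_in_quotient_carrier[OF equiv_ker_rel that] .
  show ?thesis
    unfolding drc_hom_def quot_def drc.simps
  proof (intro conjI ballI)
    fix X Y assume "X \<in> ?C // ?K" "Y \<in> ?C // ?K"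
    then have XY: "?r X \<in> ?C" "?r Y \<in> ?C" using r by auto
    then have "drc_mult S (?r X) (?r Y) \<in> ?C" using closed unfolding drc_closed_def by blast
    then have "induced_map f (?K `` {drc_mult S (?r X) (?r Y)}) = f (drc_mult S (?r X) (?r Y))"
      by (rule induced_map_class)
    also have "\<dots> = drc_mult T (f (?r X)) (f (?r Y))" using hom XY unfolding drc_hom_def by blast
    finally show "induced_map f (?K `` {drc_mult S (?r X) (?r Y)}) =
        drc_mult T (induced_map f X) (induced_map f Y)" unfolding induced_map_def .
  next
    fix X assume "X \<in> ?C // ?K"
    then have X: "?r X \<in> ?C" using r by auto
    then have DR: "drc_D S (?r X) \<in> ?C" "drc_R S (?r X) \<in> ?C"
      using closed unfolding drc_closed_def by blast+
    have "induced_map f (?K `` {drc_D S (?r X)}) = f (drc_D S (?r X))"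
      "induced_map f (?K `` {drc_R S (?r X)}) = f (drc_R S (?r X))"
      using induced_map_class[OF DR(1)] induced_map_class[OF DR(2)] .
    moreover have "f (drc_D S (?r X)) = drc_D T (f (?r X))" "f (drc_R S (?r X)) = drc_R T (f (?r X))"
      using hom X unfolding drc_hom_def by blast+
    ultimately show "induced_map f (?K `` {drc_D S (?r X)}) = drc_D T (induced_map f X)"
      and "induced_map f (?K `` {drc_R S (?r X)}) = drc_R T (induced_map f X)"
      unfolding induced_map_def by simp_all
  qed
qed

lemma bij_betw_induced_map:
  assumes onto: "f ` drc_carrier S = B"
  shows "bij_betw (induced_map f) (drc_carrier S // ker_rel S f) B"
proof (rule bij_betw_imageI)
  let ?C = "drc_carrier S" and ?K = "ker_rel S f"
  show "inj_on (induced_map f) (?C // ?K)"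
  proof (rule inj_onI)
    fix X Y assume X: "X \<in> ?C // ?K" and Y: "Y \<in> ?C // ?K"
      and eq: "induced_map f X = induced_map f Y"
    obtain a where a: "X = ?K `` {a}" "a \<in> ?C" using X by (rule quotientE)
    obtain b where b: "Y = ?K `` {b}" "b \<in> ?C" using Y by (rule quotientE)
    have "f a = induced_map f X" unfolding a(1) by (rule induced_map_class[OF a(2), symmetric])
    also have "\<dots> = induced_map f Y" by (rule eq)
    also have "\<dots> = f b" unfolding b(1) by (rule induced_map_class[OF b(2)])
    finally have "(a, b) \<in> ?K" using a(2) b(2) unfolding ker_rel_def by simp
    then show "X = Y" using a(1) b(1) equiv_class_eq[OF equiv_ker_rel] by simp
  qed
  show "induced_map f ` (?C // ?K) = B"
  proof
    show "induced_map f ` (?C // ?K) \<subseteq> B"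
    proof
      fix c assume "c \<in> induced_map f ` (?C // ?K)"
      then obtain X where X: "X \<in> ?C // ?K" "c = induced_map f X" by blast
      obtain a where a: "X = ?K `` {a}" "a \<in> ?C" using X(1) by (rule quotientE)
      then have "c = f a" using X(2) induced_map_class[OF a(2), of f] by (simp only:)
      then show "c \<in> B" using a(2) onto by blast
    qed
    show "B \<subseteq> induced_map f ` (?C // ?K)"
    proof
      fix c assume "c \<in> B"
      then obtain a where a: "a \<in> ?C" "c = f a" using onto by blast
      then have "c = induced_map f (?K `` {a})" using induced_map_class[OF a(1), of f] by (simp only:)
      then show "c \<in> induced_map f ` (?C // ?K)" by (rule image_eqI) (rule quotientI[OF a(1)])
    qed
  qed
qed

lemma quot_ker_rel_iso:
  assumes "drc_closed S" "drc_hom S T f" "f ` drc_carrier S = drc_carrier T"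
  shows "drc_iso (quot S (ker_rel S f)) T (induced_map f)"
proof -
  have "drc_carrier (quot S (ker_rel S f)) = drc_carrier S // ker_rel S f"
    by (simp add: quot_def)
  then show ?thesis
    using drc_hom_induced_map[OF assms(1,2)] bij_betw_induced_map[OF assms(3)]
    unfolding drc_iso_iff_hom_bij by simp
qed

lemma drc_iso_inv_into:
  assumes iso: "drc_iso S T f" and closed: "drc_closed S"
  shows "drc_iso T S (inv_into (drc_carrier S) f)"
proof -
  let ?g = "inv_into (drc_carrier S) f"
  have bij: "bij_betw f (drc_carrier S) (drc_carrier T)"
    using iso unfolding drc_iso_def by blast
  have g: "?g a \<in> drc_carrier S" "f (?g a) = a" if "a \<in> drc_carrier T" for a
    using bij that by (metis bij_betw_imp_surj_on f_inv_into_f inv_into_into)+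
  have gf: "?g (f a) = a" if "a \<in> drc_carrier S" for a
    using bij that by (simp add: bij_betw_imp_inj_on)
  have hom: "drc_hom S T f" using iso unfolding drc_iso_iff_hom_bij by blast
  have "drc_hom T S ?g"
    unfolding drc_hom_def
  proof (intro conjI ballI)
    fix a b assume a: "a \<in> drc_carrier T" and b: "b \<in> drc_carrier T"
    have "f (drc_mult S (?g a) (?g b)) = drc_mult T a b"
      using hom g a b unfolding drc_hom_def by metis
    then show "?g (drc_mult T a b) = drc_mult S (?g a) (?g b)"
      using gf closed g a b unfolding drc_closed_def by metis
  next
    fix a assume a: "a \<in> drc_carrier T"
    have "f (drc_D S (?g a)) = drc_D T a" "f (drc_R S (?g a)) = drc_R T a"
      using hom g a unfolding drc_hom_def by metis+
    then show "?g (drc_D T a) = drc_D S (?g a)" "?g (drc_R T a) = drc_R S (?g a)"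
      using gf closed g a unfolding drc_closed_def by metis+
  qed
  then show ?thesis
    unfolding drc_iso_iff_hom_bij using bij_betw_inv_into[OF bij] by blast
qed

locale drc_semigroup =
  fixes S :: "'a drc"
  assumes drc: "drc S"
begin

abbreviation "C \<equiv> drc_carrier S"
abbreviation "m \<equiv> drc_mult S"
abbreviation "D \<equiv> drc_D S"
abbreviation "R \<equiv> drc_R S"

lemma mult_closed: "a \<in> C \<Longrightarrow> b \<in> C \<Longrightarrow> m a b \<in> C"
  and D_closed: "a \<in> C \<Longrightarrow> D a \<in> C"
  and R_closed: "a \<in> C \<Longrightarrow> R a \<in> C"
  and mult_assoc: "a \<in> C \<Longrightarrow> b \<in> C \<Longrightarrow> c \<in> C \<Longrightarrow> m (m a b) c = m a (m b c)"
  and D_mult_self: "a \<in> C \<Longrightarrow> m (D a) a = a"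
  and mult_R_self: "a \<in> C \<Longrightarrow> m a (R a) = a"
  and R_D: "a \<in> C \<Longrightarrow> R (D a) = D a"
  and D_R: "a \<in> C \<Longrightarrow> D (R a) = R a"
  and D_mult_D: "a \<in> C \<Longrightarrow> b \<in> C \<Longrightarrow> D (m a b) = D (m a (D b))"
  and R_R_mult: "a \<in> C \<Longrightarrow> b \<in> C \<Longrightarrow> R (m a b) = R (m (R a) b)"
  and D_mult_sandwich: "a \<in> C \<Longrightarrow> b \<in> C \<Longrightarrow> D (m a b) = m (m (D a) (D (m a b))) (D a)"
  and R_mult_sandwich: "a \<in> C \<Longrightarrow> b \<in> C \<Longrightarrow> R (m a b) = m (m (R b) (R (m a b))) (R b)"
  using drc unfolding drc_def Let_def by blast+

lemma projs_closed: "p \<in> projs S \<Longrightarrow> p \<in> C"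
  unfolding projs_def using D_closed by auto

lemma D_proj: "p \<in> projs S \<Longrightarrow> D p = p"
  unfolding projs_def using R_D D_R D_closed by fastforce

lemma R_proj: "p \<in> projs S \<Longrightarrow> R p = p"
  unfolding projs_def using R_D by auto

lemma proj_idem: "p \<in> projs S \<Longrightarrow> m p p = p"
  using mult_R_self projs_closed R_proj by metis

lemma R_in_projs: "a \<in> C \<Longrightarrow> R a \<in> projs S"
  unfolding projs_def using D_R R_closed by (metis image_eqI)

lemma D_in_projs: "a \<in> C \<Longrightarrow> D a \<in> projs S"
  unfolding projs_def by simp

text \<open>D(ab) = D(a) D(ab) D(a) makes D(ab) absorb D(a) on the left, since D(a) is idempotent.\<close>

lemma D_mult_below:
  assumes "a \<in> C" "b \<in> C" shows "m (D a) (D (m a b)) = D (m a b)"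
proof -
  let ?e = "D a" and ?f = "D (m a b)"
  have "?e \<in> C" "?f \<in> C" "m ?e ?e = ?e"
    using assms D_closed mult_closed proj_idem D_in_projs by auto
  then have "m ?e (m (m ?e ?f) ?e) = m (m ?e ?f) ?e"
    using mult_assoc mult_closed by metis
  then show ?thesis using D_mult_sandwich[OF assms] by simp
qed

lemma R_mult_below:
  assumes "a \<in> C" "b \<in> C" shows "m (R (m a b)) (R b) = R (m a b)"
proof -
  let ?e = "R b" and ?f = "R (m a b)"
  have "?e \<in> C" "?f \<in> C" "m ?e ?e = ?e"
    using assms R_closed mult_closed proj_idem R_in_projs by auto
  then have "m (m (m ?e ?f) ?e) ?e = m (m ?e ?f) ?e"
    using mult_assoc mult_closed by metis
  then show ?thesis using R_mult_sandwich[OF assms] by simp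
qed

end

section \<open>Projection algebras\<close>

locale proj_algebra =
  fixes P :: "'p set" and th de :: "'p \<Rightarrow> 'p \<Rightarrow> 'p"
  assumes proj_alg: "proj_alg P th de"
begin

lemma th_closed: "p \<in> P \<Longrightarrow> q \<in> P \<Longrightarrow> th p q \<in> P"
  and de_closed: "p \<in> P \<Longrightarrow> q \<in> P \<Longrightarrow> de p q \<in> P"
  and th_self: "p \<in> P \<Longrightarrow> th p p = p"
  and de_self: "p \<in> P \<Longrightarrow> de p p = p"
  and th_th_self: "p \<in> P \<Longrightarrow> q \<in> P \<Longrightarrow> th (th p q) p = th p q"
  and de_de_self: "p \<in> P \<Longrightarrow> q \<in> P \<Longrightarrow> de (de p q) p = de p q"
  and th_th_th: "p \<in> P \<Longrightarrow> q \<in> P \<Longrightarrow> x \<in> P \<Longrightarrow> th (th p q) (th q x) = th p (th q x)"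
  and de_de_de: "p \<in> P \<Longrightarrow> q \<in> P \<Longrightarrow> x \<in> P \<Longrightarrow> de (de p q) (de q x) = de p (de q x)"
  and de_th: "p \<in> P \<Longrightarrow> x \<in> P \<Longrightarrow> de p (th p x) = th p x"
  and th_de: "p \<in> P \<Longrightarrow> x \<in> P \<Longrightarrow> th p (de p x) = de p x"
  and th_th_de: "p \<in> P \<Longrightarrow> q \<in> P \<Longrightarrow> x \<in> P \<Longrightarrow> th p (th (de q p) x) = th p (th q x)"
  and de_de_th: "p \<in> P \<Longrightarrow> q \<in> P \<Longrightarrow> x \<in> P \<Longrightarrow> de p (de (th q p) x) = de p (de q x)"
  using proj_alg unfolding proj_alg_def by blast+

lemma th_idem: "p \<in> P \<Longrightarrow> x \<in> P \<Longrightarrow> th p (th p x) = th p x"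
  by (metis de_th th_de th_closed)

lemma de_idem: "p \<in> P \<Longrightarrow> x \<in> P \<Longrightarrow> de p (de p x) = de p x"
  by (metis de_th th_de de_closed)

lemma de_de_same: "p \<in> P \<Longrightarrow> q \<in> P \<Longrightarrow> de (de p q) q = de p q"
  using de_de_de[of p q q] de_self[of q] by simp

definition proj_le :: "'p \<Rightarrow> 'p \<Rightarrow> bool" (infix "\<preceq>" 50) where
  "r \<preceq> s \<longleftrightarrow> de s r = r"

lemma proj_le_iff_th: "r \<in> P \<Longrightarrow> s \<in> P \<Longrightarrow> r \<preceq> s \<longleftrightarrow> th s r = r"
  unfolding proj_le_def by (metis de_th th_de)

lemma proj_le_antisym: "r \<in> P \<Longrightarrow> s \<in> P \<Longrightarrow> r \<preceq> s \<Longrightarrow> s \<preceq> r \<Longrightarrow> r = s"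
  unfolding proj_le_def by (metis de_de_self)

lemma th_below: "p \<in> P \<Longrightarrow> x \<in> P \<Longrightarrow> th p x \<preceq> p"
  unfolding proj_le_def by (rule de_th)

lemma de_below: "p \<in> P \<Longrightarrow> x \<in> P \<Longrightarrow> de p x \<preceq> p"
  unfolding proj_le_def by (rule de_idem)

lemma de_mono:
  assumes "p \<in> P" "r \<in> P" "s \<in> P" "r \<preceq> s"
  shows "de p r \<preceq> de p s"
proof -
  have "de s r = r" using assms(4) unfolding proj_le_def .
  then have eq: "de (de p s) r = de p r" using de_de_de[of p s r] assms(1-3) by simp
  have "de (de p s) (de p r) = de (de p s) (de (de p s) r)" using eq by simp
  also have "\<dots> = de p r" using de_idem[of "de p s" r] eq assms de_closed by simp
  finally show ?thesis unfolding proj_le_def .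
qed

lemma th_mono:
  assumes "p \<in> P" "r \<in> P" "s \<in> P" "r \<preceq> s"
  shows "th p r \<preceq> th p s"
proof -
  have "th s r = r" using assms proj_le_iff_th by blast
  then have eq: "th (th p s) r = th p r" using th_th_th[of p s r] assms(1-3) by simp
  have "th (th p s) (th p r) = th (th p s) (th (th p s) r)" using eq by simp
  also have "\<dots> = th p r" using th_idem[of "th p s" r] eq assms th_closed by simp
  finally show ?thesis using proj_le_iff_th assms th_closed by blast
qed

lemma th_of_above: "t \<in> P \<Longrightarrow> r \<in> P \<Longrightarrow> t \<preceq> r \<Longrightarrow> th t r = t"
  using th_th_self[of r t] proj_le_iff_th by simp

lemma th_absorb_above: "f \<in> P \<Longrightarrow> e \<in> P \<Longrightarrow> x \<in> P \<Longrightarrow> f \<preceq> e \<Longrightarrow> th f (th e x) = th f x"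
  using th_th_de[of f e x] th_idem[of f x] unfolding proj_le_def by simp

lemma th_absorb_below: "f \<in> P \<Longrightarrow> e \<in> P \<Longrightarrow> x \<in> P \<Longrightarrow> f \<preceq> e \<Longrightarrow> th e (th f x) = th f x"
  using th_th_th[of e f x] th_idem[of f x] proj_le_iff_th by simp

lemma de_absorb_above: "f \<in> P \<Longrightarrow> e \<in> P \<Longrightarrow> x \<in> P \<Longrightarrow> f \<preceq> e \<Longrightarrow> de f (de e x) = de f x"
  using de_de_th[of f e x] de_idem[of f x] proj_le_iff_th by simp

lemma de_absorb_below: "f \<in> P \<Longrightarrow> e \<in> P \<Longrightarrow> x \<in> P \<Longrightarrow> f \<preceq> e \<Longrightarrow> de e (de f x) = de f x"
  using de_de_de[of e f x] de_idem[of f x] unfolding proj_le_def by simp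

lemma fF_de_th:
  assumes r: "r \<in> P" and q: "q \<in> P"
  shows "fF th de (de r (th q r)) (th q r)"
proof -
  define s where "s = th q r"
  define t where "t = de r s"
  have s: "s \<in> P" and t: "t \<in> P" using r q th_closed de_closed unfolding s_def t_def by auto
  have "th s t = th s (th t r)" using th_of_above[OF t r] de_below[OF r s] t_def by simp
  also have "\<dots> = th s (th r r)" using th_th_de[OF s r r] t_def by simp
  also have "\<dots> = th q (th r r)" using th_th_th[OF q r r] s_def by simp
  also have "\<dots> = s" using th_self[OF r] s_def by simp
  finally show ?thesis using de_de_same[OF r s] unfolding fF_def s_def t_def by simp
qed

lemma th_fF_left:
  assumes "t \<in> P" "r \<in> P" "r' \<in> P" "fF th de r' r" "t \<preceq> r"
  shows "th t r' = t"
proof -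
  have "th t r' = th t (th r r')" using th_absorb_above assms by simp
  also have "\<dots> = th t r" using assms(4) unfolding fF_def by simp
  finally show ?thesis using th_of_above assms by simp
qed

subsection \<open>F-chains and the word relation\<close>

abbreviation "Fchain \<equiv> fchain P th de"
abbreviation "FR \<equiv> frel P th de"

lemma fchain_singleton [simp]: "Fchain [a] \<longleftrightarrow> a \<in> P"
  unfolding fchain_def by auto

lemma fchain_Cons_Cons [simp]:
  "Fchain (a # b # w) \<longleftrightarrow> a \<in> P \<and> fF th de a b \<and> Fchain (b # w)"
  unfolding fchain_def by (auto simp: less_Suc_eq_0_disj)

lemma fchain_words: "Fchain w \<Longrightarrow> w \<in> lists P \<and> w \<noteq> []"
  unfolding fchain_def by auto

lemma fchain_hd_last: "Fchain w \<Longrightarrow> hd w \<in> P \<and> last w \<in> P"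
  using fchain_words[of w] by (metis hd_in_set last_in_set in_listsD)

lemma fchain_snoc: "Fchain (w @ [a]) \<Longrightarrow> b \<in> P \<Longrightarrow> fF th de a b \<Longrightarrow> Fchain (w @ [a, b])"
  by (induction w rule: induct_list012) auto

lemma fchain_butlast: "Fchain (w @ [a]) \<Longrightarrow> w \<noteq> [] \<Longrightarrow> Fchain w"
  by (induction w rule: induct_list012) auto

lemma fchain_last_two: "Fchain (w @ [a, b]) \<Longrightarrow> fF th de a b"
  by (induction w rule: induct_list012) auto

lemma frel_words: "(u, v) \<in> FR \<Longrightarrow> u \<in> lists P \<and> u \<noteq> [] \<and> v \<in> lists P \<and> v \<noteq> []"
  by (induction rule: frel.induct) (auto intro: th_closed de_closed)

lemma frel_append_left: "(u, v) \<in> FR \<Longrightarrow> x \<in> lists P \<Longrightarrow> (x @ u, x @ v) \<in> FR"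
  using frel_ctx[of u v P th de x "[]"] by simp

lemma frel_append_right: "(u, v) \<in> FR \<Longrightarrow> y \<in> lists P \<Longrightarrow> (u @ y, v @ y) \<in> FR"
  using frel_ctx[of u v P th de "[]" y] by simp

lemma frel_below:
  assumes "r \<in> P" "t \<in> P" "t \<preceq> r"
  shows "([r, t], [t]) \<in> FR"
proof -
  have "([r, t], [de r t, t]) \<in> FR" using assms(1,2) by (rule frel_de)
  then have "([r, t], [t, t]) \<in> FR" using assms(3) unfolding proj_le_def by simp
  then show ?thesis using frel_idem[OF assms(2)] by (rule frel_trans)
qed

text \<open>The new last entry t replaces r; the previous entry r' is replaced by t delta_r',
  which is F-related to t, and so on back along the chain.\<close>

lemma fchain_snoc_below:
  "Fchain (v @ [r]) \<Longrightarrow> t \<in> P \<Longrightarrow> t \<preceq> r \<Longrightarrow> \<exists>w. Fchain (w @ [t]) \<and> (v @ [r, t], w @ [t]) \<in> FR"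
proof (induction v arbitrary: r t rule: rev_induct)
  case Nil
  then show ?case using frel_below[of r t] by (intro exI[of _ "[]"]) auto
next
  case (snoc r' v)
  have chain: "Fchain (v @ [r', r])" using snoc.prems by simp
  have F: "fF th de r' r" using fchain_last_two[OF chain] .
  have r: "r \<in> P" and r': "r' \<in> P" and v: "v \<in> lists P" using fchain_words[OF chain] by auto
  have t: "t \<in> P" "t \<preceq> r" using snoc.prems by auto
  define t' where "t' = de r' t"
  have t': "t' \<in> P" "t' \<preceq> r'" unfolding t'_def using de_closed de_below r' t by auto
  have Ft: "fF th de t' t"
    using fF_de_th[OF r' t(1)] th_fF_left[OF t(1) r r' F t(2)] unfolding t'_def by simp
  obtain w' where w': "Fchain (w' @ [t'])" "(v @ [r', t'], w' @ [t']) \<in> FR"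
    using snoc.IH[of r' t'] chain fchain_butlast[of "v @ [r']" r] t' by auto
  have "(v @ [r', r, t], v @ [r', t]) \<in> FR"
    using frel_append_left[OF frel_below[OF r t], of "v @ [r']"] v r' by simp
  moreover have "(v @ [r', t], v @ [t', t]) \<in> FR"
    using frel_append_left[OF frel_de[OF r' t(1)], of v] v unfolding t'_def by simp
  moreover have "(v @ [t', t], v @ [r', t', t]) \<in> FR"
    using frel_append_left[OF frel_append_right[OF frel_sym[OF frel_below[OF r' t']], of "[t]"], of v]
      v t by simp
  moreover have "(v @ [r', t', t], w' @ [t', t]) \<in> FR"
    using frel_append_right[OF w'(2), of "[t]"] t by simp
  ultimately have "(v @ [r', r, t], w' @ [t', t]) \<in> FR"
    by (meson frel_trans)
  moreover have "Fchain (w' @ [t', t])" using fchain_snoc[OF w'(1) t(1) Ft] .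
  ultimately show ?case by (intro exI[of _ "w' @ [t']"]) simp
qed

lemma fchain_snoc_letter:
  assumes chain: "Fchain (v @ [r])" and q: "q \<in> P"
  shows "\<exists>w. Fchain w \<and> (v @ [r, q], w) \<in> FR"
proof -
  have r: "r \<in> P" and v: "v \<in> lists P" using fchain_words[OF chain] by auto
  define s where "s = th q r"
  define t where "t = de r s"
  have s: "s \<in> P" and t: "t \<in> P" "t \<preceq> r"
    unfolding s_def t_def using th_closed de_closed de_below q r by auto
  have Ft: "fF th de t s" unfolding t_def s_def using fF_de_th[OF r q] .
  obtain w where w: "Fchain (w @ [t])" "(v @ [r, t], w @ [t]) \<in> FR"
    using fchain_snoc_below[OF chain t] by blast
  have "(v @ [r, q], v @ [r, s]) \<in> FR"
    using frel_append_left[OF frel_th[OF r q]] v unfolding s_def by simp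
  moreover have "(v @ [r, s], v @ [t, s]) \<in> FR"
    using frel_append_left[OF frel_de[OF r s]] v unfolding t_def by simp
  moreover have "(v @ [t, s], v @ [r, t, s]) \<in> FR"
    using frel_append_left[OF frel_append_right[OF frel_sym[OF frel_below[OF r t]], of "[s]"], of v]
      v s by simp
  moreover have "(v @ [r, t, s], w @ [t, s]) \<in> FR"
    using frel_append_right[OF w(2), of "[s]"] s by simp
  ultimately have "(v @ [r, q], w @ [t, s]) \<in> FR" by (meson frel_trans)
  then show ?thesis using fchain_snoc[OF w(1) s Ft] by blast
qed

lemma frel_fchain: "w \<in> lists P \<Longrightarrow> w \<noteq> [] \<Longrightarrow> \<exists>v. Fchain v \<and> (w, v) \<in> FR"
proof (induction w rule: rev_induct)
  case (snoc q u)
  have q: "q \<in> P" using snoc.prems by simp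
  show ?case
  proof (cases "u = []")
    case True
    then show ?thesis using q by (intro exI[of _ "[q]"]) (auto intro: frel_refl)
  next
    case False
    then obtain v where v: "Fchain v" "(u, v) \<in> FR" using snoc by auto
    obtain v' r where vr: "v = v' @ [r]" using fchain_words[OF v(1)] by (metis rev_exhaust)
    obtain w where w: "Fchain w" "(v' @ [r, q], w) \<in> FR"
      using fchain_snoc_letter[of v' r q] v(1) vr q by auto
    have "(u @ [q], v' @ [r, q]) \<in> FR" using frel_append_right[OF v(2), of "[q]"] vr q by simp
    then show ?thesis using w frel_trans by blast
  qed
qed simp

section \<open>The DRC-semigroup M(P)\<close>

abbreviation "hat \<equiv> hatp P th de"
abbreviation "hpr \<equiv> hprod P th de"
abbreviation "mmult \<equiv> Mmult P"
abbreviation "MP \<equiv> Mdrc P th de"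
abbreviation "MC \<equiv> sgen mmult (hat ` P)"
abbreviation "Tpairs \<equiv> (P \<rightarrow>\<^sub>E P) \<times> (P \<rightarrow>\<^sub>E P)"

lemma MP_simps [simp]: "drc_carrier MP = MC" "drc_mult MP = mmult"
  unfolding Mdrc_def by simp_all

lemma mmult_fst: "fst (mmult a b) = (\<lambda>x\<in>P. fst b (fst a x))"
  and mmult_snd: "snd (mmult a b) = (\<lambda>x\<in>P. snd a (snd b x))"
  and hat_fst: "fst (hat p) = (\<lambda>x\<in>P. th p x)"
  and hat_snd: "snd (hat p) = (\<lambda>x\<in>P. de p x)"
  unfolding Mmult_def tcomp_def hatp_def by simp_all

lemma hat_Tpairs: "p \<in> P \<Longrightarrow> hat p \<in> Tpairs"
  unfolding hatp_def using th_closed de_closed by auto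

lemma mmult_Tpairs: "a \<in> Tpairs \<Longrightarrow> b \<in> Tpairs \<Longrightarrow> mmult a b \<in> Tpairs"
  unfolding mem_Times_iff mmult_fst mmult_snd by auto

lemma Tpairs_eqI:
  assumes "a \<in> Tpairs" "b \<in> Tpairs"
    and "\<And>x. x \<in> P \<Longrightarrow> fst a x = fst b x" "\<And>x. x \<in> P \<Longrightarrow> snd a x = snd b x"
  shows "a = b"
  using assms by (metis PiE_ext mem_Times_iff prod_eqI)

lemma mmult_assoc: "a \<in> Tpairs \<Longrightarrow> c \<in> Tpairs \<Longrightarrow> mmult (mmult a b) c = mmult a (mmult b c)"
  unfolding Mmult_def tcomp_def by (auto intro!: restrict_ext)

lemma hprod_Cons: "w \<noteq> [] \<Longrightarrow> hpr (a # w) = mmult (hat a) (hpr w)"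
  by (cases w) auto

lemma hprod_Tpairs: "w \<in> lists P \<Longrightarrow> w \<noteq> [] \<Longrightarrow> hpr w \<in> Tpairs"
proof (induction w)
  case (Cons a w)
  then show ?case by (cases "w = []") (auto simp: hprod_Cons hat_Tpairs mmult_Tpairs)
qed simp

lemma hprod_append:
  "u \<in> lists P \<Longrightarrow> u \<noteq> [] \<Longrightarrow> v \<in> lists P \<Longrightarrow> v \<noteq> [] \<Longrightarrow> hpr (u @ v) = mmult (hpr u) (hpr v)"
proof (induction u)
  case (Cons a u)
  show ?case
  proof (cases "u = []")
    case False
    then have "hpr ((a # u) @ v) = mmult (hat a) (mmult (hpr u) (hpr v))"
      using Cons by (simp add: hprod_Cons)
    also have "\<dots> = mmult (mmult (hat a) (hpr u)) (hpr v)"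
      using mmult_assoc hat_Tpairs hprod_Tpairs Cons by auto
    finally show ?thesis using False by (simp add: hprod_Cons)
  qed (use Cons in \<open>simp add: hprod_Cons\<close>)
qed simp

lemma hat_idem: "p \<in> P \<Longrightarrow> mmult (hat p) (hat p) = hat p"
  by (rule Tpairs_eqI) (auto simp: mmult_Tpairs hat_Tpairs mmult_fst mmult_snd hat_fst hat_snd
      th_closed de_closed th_idem de_idem)

lemma hat_mult_th: "p \<in> P \<Longrightarrow> q \<in> P \<Longrightarrow> mmult (hat p) (hat q) = mmult (hat p) (hat (th q p))"
  by (rule Tpairs_eqI) (auto simp: mmult_Tpairs hat_Tpairs mmult_fst mmult_snd hat_fst hat_snd
      th_closed de_closed th_th_th de_de_th)

lemma hat_mult_de: "p \<in> P \<Longrightarrow> q \<in> P \<Longrightarrow> mmult (hat p) (hat q) = mmult (hat (de p q)) (hat q)"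
  by (rule Tpairs_eqI) (auto simp: mmult_Tpairs hat_Tpairs mmult_fst mmult_snd hat_fst hat_snd
      th_closed de_closed th_th_de de_de_de)

lemma frel_hprod: "(u, v) \<in> FR \<Longrightarrow> hpr u = hpr v"
proof (induction rule: frel.induct)
  case (frel_idem p)
  then show ?case by (simp add: hat_idem)
next
  case (frel_th p q)
  then show ?case by (simp add: hat_mult_th)
next
  case (frel_de p q)
  then show ?case by (simp add: hat_mult_de)
next
  case (frel_ctx u v x y)
  then have u: "u \<in> lists P" "u \<noteq> []" and v: "v \<in> lists P" "v \<noteq> []"
    using frel_words by blast+
  have "hpr (u @ y) = hpr (v @ y)"
    using frel_ctx u v by (cases "y = []") (auto simp: hprod_append)
  then show ?case using frel_ctx u v by (cases "x = []") (auto simp: hprod_append)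
qed simp_all

lemma MC_eq_hprod_image: "MC = hpr ` (lists P - {[]})"
proof
  show "MC \<subseteq> hpr ` (lists P - {[]})"
  proof
    fix a assume "a \<in> MC"
    then show "a \<in> hpr ` (lists P - {[]})"
    proof (induction rule: sgen.induct)
      case (sgen_base a)
      then obtain p where "p \<in> P" "a = hpr [p]" by (auto simp only: hprod.simps)
      then show ?case by (intro image_eqI[of _ _ "[p]"]) simp_all
    next
      case (sgen_mult a b)
      then obtain u v where u: "u \<in> lists P - {[]}" and v: "v \<in> lists P - {[]}"
        and "a = hpr u" "b = hpr v" by blast
      then have "mmult a b = hpr (u @ v)" by (simp add: hprod_append)
      moreover have "u @ v \<in> lists P - {[]}" using u v by simp
      ultimately show ?case by blast
    qed
  qed
  show "hpr ` (lists P - {[]}) \<subseteq> MC"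
  proof
    fix a assume "a \<in> hpr ` (lists P - {[]})"
    then obtain w where w: "w \<in> lists P" "w \<noteq> []" "a = hpr w" by blast
    have "hpr w \<in> MC" if "w \<in> lists P" "w \<noteq> []" for w
      using that
    proof (induction w)
      case (Cons p w)
      then have "hat p \<in> MC" by (intro sgen_base) simp
      then show ?case using Cons by (cases "w = []") (simp_all add: hprod_Cons sgen_mult)
    qed simp
    then show "a \<in> MC" using w by simp
  qed
qed

lemma hat_in_MC: "p \<in> P \<Longrightarrow> hat p \<in> MC"
  by (rule sgen_base) simp

lemma mmult_in_MC: "a \<in> MC \<Longrightarrow> b \<in> MC \<Longrightarrow> mmult a b \<in> MC"
  by (rule sgen_mult)

lemma MC_Tpairs: "a \<in> MC \<Longrightarrow> a \<in> Tpairs"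
  unfolding MC_eq_hprod_image using hprod_Tpairs by blast

lemma MC_closed: "a \<in> MC \<Longrightarrow> x \<in> P \<Longrightarrow> fst a x \<in> P \<and> snd a x \<in> P"
  using MC_Tpairs[of a] unfolding mem_Times_iff by (auto simp: PiE_iff)

lemma MC_fchain:
  assumes "a \<in> MC" obtains w where "Fchain w" "a = hpr w"
proof -
  obtain u where u: "u \<in> lists P" "u \<noteq> []" "a = hpr u"
    using assms unfolding MC_eq_hprod_image by blast
  obtain w where "Fchain w" "(u, w) \<in> FR" using frel_fchain[OF u(1,2)] by blast
  then show ?thesis using that frel_hprod u(3) by simp
qed

lemma MC_mono:
  assumes "a \<in> MC" "r \<in> P" "s \<in> P" "r \<preceq> s"
  shows "fst a r \<preceq> fst a s" "snd a r \<preceq> snd a s"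
proof -
  have "\<forall>r\<in>P. \<forall>s\<in>P. r \<preceq> s \<longrightarrow> fst a r \<preceq> fst a s \<and> snd a r \<preceq> snd a s"
    using assms(1)
  proof (induction rule: sgen.induct)
    case (sgen_base a)
    then show ?case by (auto simp: hat_fst hat_snd th_mono de_mono)
  next
    case (sgen_mult a b)
    then show ?case by (simp add: mmult_fst mmult_snd MC_closed)
  qed
  then show "fst a r \<preceq> fst a s" "snd a r \<preceq> snd a s" using assms by auto
qed


lemma hprod_closed:
  "w \<in> lists P \<Longrightarrow> w \<noteq> [] \<Longrightarrow> x \<in> P \<Longrightarrow> fst (hpr w) x \<in> P \<and> snd (hpr w) x \<in> P"
  using hprod_Tpairs[of w] unfolding mem_Times_iff by (auto simp: PiE_iff)

lemma fst_hprod_Cons_th: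
  "b \<in> P \<Longrightarrow> w \<in> lists P \<Longrightarrow> x \<in> P \<Longrightarrow> fst (hpr (b # w)) (th b x) = fst (hpr (b # w)) x"
  by (cases "w = []") (simp_all add: hprod_Cons mmult_fst hat_fst th_idem th_closed)

lemma fst_hprod_below: "w \<in> lists P \<Longrightarrow> w \<noteq> [] \<Longrightarrow> x \<in> P \<Longrightarrow> fst (hpr w) x \<preceq> last w"
proof (induction w arbitrary: x)
  case (Cons a w)
  show ?case
  proof (cases "w = []")
    case True
    then show ?thesis using Cons.prems th_below by (simp add: hat_fst)
  next
    case False
    then have "fst (hpr (a # w)) x = fst (hpr w) (th a x)"
      using Cons.prems by (simp add: hprod_Cons mmult_fst hat_fst)
    then show ?thesis using Cons False th_closed by simp
  qed
qed simp

lemma snd_hprod_below: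
  assumes w: "w \<in> lists P" "w \<noteq> []" and x: "x \<in> P"
  shows "snd (hpr w) x \<preceq> hd w"
proof -
  obtain a w' where aw: "w = a # w'" using w(2) by (cases w) auto
  show ?thesis
  proof (cases "w' = []")
    case True
    then show ?thesis using aw w x de_below by (simp add: hat_snd)
  next
    case False
    have "snd (hpr w') x \<in> P" using hprod_closed aw w x False by simp
    then have "snd (hpr w) x = de a (snd (hpr w') x)"
      using aw False x by (simp add: hprod_Cons mmult_snd hat_snd)
    then show ?thesis using \<open>snd (hpr w') x \<in> P\<close> aw w de_below by simp
  qed
qed

lemma fchain_hprod_hd: "Fchain w \<Longrightarrow> fst (hpr w) (hd w) = last w"
proof (induction w rule: induct_list012)
  case (2 p)
  then show ?case by (simp add: hat_fst th_self)
next
  case (3 a b w)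
  have F: "fF th de a b" and chain: "Fchain (b # w)" and a: "a \<in> P" using "3.prems" by auto
  have b: "b \<in> P" and w: "w \<in> lists P" using fchain_words[OF chain] by auto
  have "fst (hpr (a # b # w)) a = fst (hpr (b # w)) (th a a)"
    using a by (simp add: mmult_fst hat_fst)
  also have "\<dots> = fst (hpr (b # w)) (th b a)" using fst_hprod_Cons_th[OF b w a] th_self[OF a] by simp
  also have "\<dots> = fst (hpr (b # w)) b" using F unfolding fF_def by simp
  also have "\<dots> = last (b # w)" using "3.IH"(2)[OF chain] by simp
  finally show ?case by simp
qed (simp add: fchain_def)

lemma fchain_hprod_last: "Fchain w \<Longrightarrow> snd (hpr w) (last w) = hd w"
proof (induction w rule: induct_list012)
  case (2 p)
  then show ?case by (simp add: hat_snd de_self)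
next
  case (3 a b w)
  have F: "fF th de a b" and chain: "Fchain (b # w)" and a: "a \<in> P" using "3.prems" by auto
  have l: "last (b # w) \<in> P" and bw: "b # w \<in> lists P" using fchain_words[OF chain] by auto
  then have "snd (hpr (b # w)) (last (b # w)) \<in> P" using hprod_closed[OF bw] by simp
  then have "snd (hpr (a # b # w)) (last (a # b # w)) = de a (snd (hpr (b # w)) (last (b # w)))"
    using l by (simp only: hprod.simps mmult_snd hat_snd last.simps list.distinct if_False
        restrict_apply' )
  also have "\<dots> = de a b" using "3.IH"(2)[OF chain] by simp
  also have "\<dots> = a" using F unfolding fF_def by simp
  finally show ?case by simp
qed (simp add: fchain_def)


definition greatest_value :: "('p \<Rightarrow> 'p) \<Rightarrow> 'p \<Rightarrow> bool" where
  "greatest_value f p \<longleftrightarrow> p \<in> f ` P \<and> (\<forall>x\<in>P. f x \<preceq> p)"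

lemma greatest_value_unique:
  assumes closed: "\<And>x. x \<in> P \<Longrightarrow> f x \<in> P"
    and p: "greatest_value f p" and q: "greatest_value f q"
  shows "p = q"
proof -
  obtain x y where "x \<in> P" "p = f x" "y \<in> P" "q = f y"
    using p q unfolding greatest_value_def by blast
  then show ?thesis using p q closed proj_le_antisym unfolding greatest_value_def by metis
qed

lemma fchain_greatest_snd: "Fchain w \<Longrightarrow> greatest_value (snd (hpr w)) (hd w)"
proof -
  assume chain: "Fchain w"
  have w: "w \<in> lists P" "w \<noteq> []" and "last w \<in> P"
    using fchain_words[OF chain] fchain_hd_last[OF chain] by auto
  then show ?thesis unfolding greatest_value_def
    using fchain_hprod_last[OF chain] snd_hprod_below[OF w] by (metis image_eqI)
qed

lemma fchain_greatest_fst: "Fchain w \<Longrightarrow> greatest_value (fst (hpr w)) (last w)"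
proof -
  assume chain: "Fchain w"
  have w: "w \<in> lists P" "w \<noteq> []" and "hd w \<in> P"
    using fchain_words[OF chain] fchain_hd_last[OF chain] by auto
  then show ?thesis unfolding greatest_value_def
    using fchain_hprod_hd[OF chain] fst_hprod_below[OF w] by (metis image_eqI)
qed

lemma MC_greatest_snd: "a \<in> MC \<Longrightarrow> \<exists>p\<in>P. greatest_value (snd a) p"
  by (metis MC_fchain fchain_greatest_snd fchain_hd_last)

lemma MC_greatest_fst: "a \<in> MC \<Longrightarrow> \<exists>p\<in>P. greatest_value (fst a) p"
  by (metis MC_fchain fchain_greatest_fst fchain_hd_last)

text \<open>D and R of M(P) are defined through a chosen F-chain representing the element; they are
  intrinsic because the head and last entry of any such chain are the greatest values of the
  second and first component.\<close>

lemma D_MP_eq: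
  assumes a: "a \<in> MC" and p: "greatest_value (snd a) p"
  shows "drc_D MP a = hat p"
proof -
  define w where "w = (SOME w. Fchain w \<and> hpr w = a)"
  have "\<exists>w. Fchain w \<and> hpr w = a" using MC_fchain[OF a] by metis
  then have w: "Fchain w \<and> hpr w = a" unfolding w_def by (rule someI_ex)
  then have "hd w = p"
    using greatest_value_unique[of "snd a"] fchain_greatest_snd p MC_closed[OF a] by metis
  then show ?thesis unfolding w_def Mdrc_def by simp
qed

lemma R_MP_eq:
  assumes a: "a \<in> MC" and p: "greatest_value (fst a) p"
  shows "drc_R MP a = hat p"
proof -
  define w where "w = (SOME w. Fchain w \<and> hpr w = a)"
  have "\<exists>w. Fchain w \<and> hpr w = a" using MC_fchain[OF a] by metis
  then have w: "Fchain w \<and> hpr w = a" unfolding w_def by (rule someI_ex)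
  then have "last w = p"
    using greatest_value_unique[of "fst a"] fchain_greatest_fst p MC_closed[OF a] by metis
  then show ?thesis unfolding w_def Mdrc_def by simp
qed

lemma greatest_value_hat_snd: "p \<in> P \<Longrightarrow> greatest_value (snd (hat p)) p"
  unfolding greatest_value_def hat_snd using de_self de_below by (auto intro!: image_eqI[of _ _ p])

lemma greatest_value_hat_fst: "p \<in> P \<Longrightarrow> greatest_value (fst (hat p)) p"
  unfolding greatest_value_def hat_fst using th_self th_below by (auto intro!: image_eqI[of _ _ p])

lemma greatest_value_mmult_snd:
  assumes a: "a \<in> MC" and b: "b \<in> Tpairs" and q: "q \<in> P" "greatest_value (snd b) q"
  shows "greatest_value (snd (mmult a b)) (snd a q)"
proof -
  have b_closed: "snd b x \<in> P" if "x \<in> P" for x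
    using b that unfolding mem_Times_iff by (auto simp: PiE_iff)
  obtain x0 where "x0 \<in> P" "snd b x0 = q" using q(2) unfolding greatest_value_def by blast
  then have "snd a q \<in> snd (mmult a b) ` P" by (auto simp: mmult_snd)
  moreover have "snd (mmult a b) x \<preceq> snd a q" if "x \<in> P" for x
    using MC_mono(2)[OF a b_closed[OF that] q(1)] q(2) that
    unfolding greatest_value_def by (simp add: mmult_snd)
  ultimately show ?thesis unfolding greatest_value_def by blast
qed

lemma greatest_value_mmult_fst:
  assumes b: "b \<in> MC" and a: "a \<in> Tpairs" and r: "r \<in> P" "greatest_value (fst a) r"
  shows "greatest_value (fst (mmult a b)) (fst b r)"
proof -
  have a_closed: "fst a x \<in> P" if "x \<in> P" for x
    using a that unfolding mem_Times_iff by (auto simp: PiE_iff)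
  obtain x0 where "x0 \<in> P" "fst a x0 = r" using r(2) unfolding greatest_value_def by blast
  then have "fst b r \<in> fst (mmult a b) ` P" by (auto simp: mmult_fst)
  moreover have "fst (mmult a b) x \<preceq> fst b r" if "x \<in> P" for x
    using MC_mono(1)[OF b a_closed[OF that] r(1)] r(2) that
    unfolding greatest_value_def by (simp add: mmult_fst)
  ultimately show ?thesis unfolding greatest_value_def by blast
qed

lemma D_hprod: "Fchain w \<Longrightarrow> drc_D MP (hpr w) = hat (hd w)"
  using D_MP_eq fchain_greatest_snd fchain_words MC_eq_hprod_image by blast

lemma R_hprod: "Fchain w \<Longrightarrow> drc_R MP (hpr w) = hat (last w)"
  using R_MP_eq fchain_greatest_fst fchain_words MC_eq_hprod_image by blast

lemma D_hat: "p \<in> P \<Longrightarrow> drc_D MP (hat p) = hat p"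
  using D_MP_eq hat_in_MC greatest_value_hat_snd by blast

lemma R_hat: "p \<in> P \<Longrightarrow> drc_R MP (hat p) = hat p"
  using R_MP_eq hat_in_MC greatest_value_hat_fst by blast

lemma D_mmult:
  assumes "a \<in> MC" "b \<in> MC" "q \<in> P" "greatest_value (snd b) q"
  shows "drc_D MP (mmult a b) = hat (snd a q)"
  using D_MP_eq[OF mmult_in_MC greatest_value_mmult_snd] MC_Tpairs assms by blast

lemma R_mmult:
  assumes "a \<in> MC" "b \<in> MC" "r \<in> P" "greatest_value (fst a) r"
  shows "drc_R MP (mmult a b) = hat (fst b r)"
  using R_MP_eq[OF mmult_in_MC greatest_value_mmult_fst] MC_Tpairs assms by blast

lemma D_mult_hat: "a \<in> MC \<Longrightarrow> p \<in> P \<Longrightarrow> drc_D MP (mmult a (hat p)) = hat (snd a p)"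
  using D_mmult hat_in_MC greatest_value_hat_snd by blast

lemma R_hat_mult: "a \<in> MC \<Longrightarrow> p \<in> P \<Longrightarrow> drc_R MP (mmult (hat p) a) = hat (fst a p)"
  using R_mmult hat_in_MC greatest_value_hat_fst by blast

lemma hat_sandwich: "e \<in> P \<Longrightarrow> f \<in> P \<Longrightarrow> f \<preceq> e \<Longrightarrow> mmult (mmult (hat e) (hat f)) (hat e) = hat f"
  by (rule Tpairs_eqI) (auto simp: mmult_Tpairs hat_Tpairs mmult_fst mmult_snd hat_fst hat_snd
      th_closed de_closed th_absorb_above th_absorb_below de_absorb_above de_absorb_below)

lemma mmult_D_self: "a \<in> MC \<Longrightarrow> mmult (drc_D MP a) a = a"
proof -
  assume "a \<in> MC"
  then obtain w where chain: "Fchain w" and a: "a = hpr w" by (rule MC_fchain)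
  then have "w \<in> lists P" "w \<noteq> []" using fchain_words by auto
  then obtain p u where w: "w = p # u" "p \<in> P" "u \<in> lists P" by (cases w) auto
  have "mmult (hat p) (hpr w) = hpr ([p, p] @ u)" using w by (simp add: hprod_Cons)
  also have "\<dots> = hpr ([p] @ u)" using frel_hprod[OF frel_append_right[OF frel_idem[OF w(2)] w(3)]] .
  finally show ?thesis using D_hprod[OF chain] a w by simp
qed

lemma mmult_R_self: "a \<in> MC \<Longrightarrow> mmult a (drc_R MP a) = a"
proof -
  assume "a \<in> MC"
  then obtain w where chain: "Fchain w" and a: "a = hpr w" by (rule MC_fchain)
  then have "w \<in> lists P" "w \<noteq> []" using fchain_words by auto
  then obtain u p where w: "w = u @ [p]" "p \<in> P" "u \<in> lists P"
    by (cases w rule: rev_exhaust) auto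
  have "mmult (hpr w) (hat p) = hpr (u @ [p, p])"
    using hprod_append[of w "[p]"] \<open>w \<in> lists P\<close> \<open>w \<noteq> []\<close> w by simp
  also have "\<dots> = hpr (u @ [p])" using frel_hprod[OF frel_append_left[OF frel_idem[OF w(2)] w(3)]] .
  finally show ?thesis using R_hprod[OF chain] a w by simp
qed


lemma drc_MP: "drc MP"
  unfolding drc_def Let_def MP_simps
proof (intro conjI ballI)
  fix a b assume a: "a \<in> MC" and b: "b \<in> MC"
  show "mmult a b \<in> MC" using a b by (rule mmult_in_MC)
  obtain e where e: "e \<in> P" "greatest_value (snd a) e" using MC_greatest_snd[OF a] by blast
  obtain q where q: "q \<in> P" "greatest_value (snd b) q" using MC_greatest_snd[OF b] by blast
  obtain r where r: "r \<in> P" "greatest_value (fst a) r" using MC_greatest_fst[OF a] by blast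
  obtain f where f: "f \<in> P" "greatest_value (fst b) f" using MC_greatest_fst[OF b] by blast
  have Dab: "drc_D MP (mmult a b) = hat (snd a q)" using D_mmult[OF a b q] .
  have Rab: "drc_R MP (mmult a b) = hat (fst b r)" using R_mmult[OF a b r] .
  have "snd a q \<in> P" "snd a q \<preceq> e" "fst b r \<in> P" "fst b r \<preceq> f"
    using MC_closed a b q(1) r(1) e(2) f(2) unfolding greatest_value_def by auto
  note sandwich = hat_sandwich[OF e(1) this(1,2)] hat_sandwich[OF f(1) this(3,4)]
  show "drc_D MP (mmult a b) = drc_D MP (mmult a (drc_D MP b))"
    using Dab D_mult_hat[OF a q(1)] D_MP_eq[OF b q(2)] by simp
  show "drc_R MP (mmult a b) = drc_R MP (mmult (drc_R MP a) b)"
    using Rab R_hat_mult[OF b r(1)] R_MP_eq[OF a r(2)] by simp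
  show "drc_D MP (mmult a b) = mmult (mmult (drc_D MP a) (drc_D MP (mmult a b))) (drc_D MP a)"
    using Dab D_MP_eq[OF a e(2)] sandwich by simp
  show "drc_R MP (mmult a b) = mmult (mmult (drc_R MP b) (drc_R MP (mmult a b))) (drc_R MP b)"
    using Rab R_MP_eq[OF b f(2)] sandwich by simp
next
  fix a b c assume "a \<in> MC" "b \<in> MC" "c \<in> MC"
  then show "mmult (mmult a b) c = mmult a (mmult b c)" using mmult_assoc MC_Tpairs by blast
next
  fix a assume a: "a \<in> MC"
  obtain e where e: "e \<in> P" "drc_D MP a = hat e" using MC_greatest_snd[OF a] D_MP_eq[OF a] by blast
  obtain r where r: "r \<in> P" "drc_R MP a = hat r" using MC_greatest_fst[OF a] R_MP_eq[OF a] by blast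
  show "drc_D MP a \<in> MC" "drc_R MP a \<in> MC" using e r hat_in_MC by simp_all
  show "mmult (drc_D MP a) a = a" "mmult a (drc_R MP a) = a"
    using a by (simp_all add: mmult_D_self mmult_R_self)
  show "drc_R MP (drc_D MP a) = drc_D MP a" "drc_D MP (drc_R MP a) = drc_R MP a"
    using e r R_hat D_hat by simp_all
qed

lemma projs_MP: "projs MP = hat ` P"
proof
  show "projs MP \<subseteq> hat ` P"
    unfolding projs_def using MC_greatest_snd D_MP_eq by fastforce
  show "hat ` P \<subseteq> projs MP"
    unfolding projs_def using D_hat hat_in_MC by (auto intro!: image_eqI)
qed

lemma inj_on_hat: "inj_on hat P"
proof (rule inj_onI)
  fix p q assume p: "p \<in> P" and q: "q \<in> P" and eq: "hat p = hat q"
  have "de p x = de q x" if "x \<in> P" for x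
    using arg_cong[OF eq, of "\<lambda>a. snd a x"] that by (simp add: hat_snd)
  then have "de q p = p" "de p q = q" using de_self p q by metis+
  then show "p = q" using proj_le_antisym p q unfolding proj_le_def by blast
qed

lemma proj_generated_MP: "proj_generated MP"
  unfolding proj_generated_def projs_MP by simp

lemma proj_alg_iso_hat: "proj_alg_iso P th de (projs MP) (thS MP) (deS MP) hat"
  unfolding proj_alg_iso_def projs_MP
proof (intro conjI ballI)
  show "bij_betw hat P (hat ` P)" using inj_on_hat by (simp add: bij_betw_def)
  fix p q assume p: "p \<in> P" and q: "q \<in> P"
  show "hat (th p q) = thS MP (hat p) (hat q)"
    unfolding thS_def using R_hat_mult[OF hat_in_MC[OF p] q] q by (simp add: hat_fst)
  show "hat (de p q) = deS MP (hat p) (hat q)"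
    unfolding deS_def using D_mult_hat[OF hat_in_MC[OF p] q] q by (simp add: hat_snd)
qed

lemma MC_eq_by_projections:
  assumes a: "a \<in> MC" and b: "b \<in> MC"
    and R_eq: "\<And>x. x \<in> P \<Longrightarrow> drc_R MP (mmult (hat x) a) = drc_R MP (mmult (hat x) b)"
    and D_eq: "\<And>x. x \<in> P \<Longrightarrow> drc_D MP (mmult a (hat x)) = drc_D MP (mmult b (hat x))"
  shows "a = b"
proof (rule Tpairs_eqI[OF MC_Tpairs[OF a] MC_Tpairs[OF b]])
  fix x assume x: "x \<in> P"
  show "fst a x = fst b x"
    using R_eq[OF x] R_hat_mult[OF a x] R_hat_mult[OF b x] MC_closed a b x inj_on_hat
    unfolding inj_on_def by metis
  show "snd a x = snd b x"
    using D_eq[OF x] D_mult_hat[OF a x] D_mult_hat[OF b x] MC_closed a b x inj_on_hat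
    unfolding inj_on_def by metis
qed

lemma mu_eq_ker_rel:
  fixes S :: "'b drc" and \<phi> :: "'b \<Rightarrow> ('p \<Rightarrow> 'p) \<times> ('p \<Rightarrow> 'p)"
  assumes closed: "drc_closed S" and hom: "drc_hom S MP \<phi>"
    and into: "\<phi> ` drc_carrier S \<subseteq> MC" and hats: "hat ` P \<subseteq> \<phi> ` drc_carrier S"
    and inj: "inj_on \<phi> (projs S)"
    and R_projs: "\<And>a. a \<in> drc_carrier S \<Longrightarrow> drc_R S a \<in> projs S"
  shows "mu S = ker_rel S \<phi>"
proof (rule mu_eqI)
  show "drc_cong S (ker_rel S \<phi>)" using closed hom by (rule drc_cong_ker_rel)
  show "proj_separating S (ker_rel S \<phi>)" using inj by (rule proj_separating_ker_rel)
  fix \<tau> assume cong: "drc_cong S \<tau>" and sep: "proj_separating S \<tau>"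
  show "\<tau> \<subseteq> ker_rel S \<phi>"
  proof (rule subrelI)
    fix a b assume ab: "(a, b) \<in> \<tau>"
    then have a: "a \<in> drc_carrier S" and b: "b \<in> drc_carrier S"
      using drc_cong_subset[OF cong] by auto
    have "\<phi> a = \<phi> b"
    proof (rule MC_eq_by_projections)
      show "\<phi> a \<in> MC" "\<phi> b \<in> MC" using into a b by auto
      fix x assume "x \<in> P"
      then obtain c where c: "c \<in> drc_carrier S" "\<phi> c = hat x" using hats by auto
      have "drc_R S (drc_mult S c a) = drc_R S (drc_mult S c b)"
        using proj_separating_cong_eq(1)[OF cong sep ab c(1) R_projs] .
      then have "\<phi> (drc_R S (drc_mult S c a)) = \<phi> (drc_R S (drc_mult S c b))" by simp
      then show "drc_R MP (mmult (hat x) (\<phi> a)) = drc_R MP (mmult (hat x) (\<phi> b))"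
        using hom closed a b c unfolding drc_hom_def drc_closed_def by (metis MP_simps(2))
      have "drc_D S (drc_mult S a c) = drc_D S (drc_mult S b c)"
        using proj_separating_cong_eq(2)[OF cong sep ab c(1) R_projs] .
      then have "\<phi> (drc_D S (drc_mult S a c)) = \<phi> (drc_D S (drc_mult S b c))" by simp
      then show "drc_D MP (mmult (\<phi> a) (hat x)) = drc_D MP (mmult (\<phi> b) (hat x))"
        using hom closed a b c unfolding drc_hom_def drc_closed_def by (metis MP_simps(2))
    qed
    then show "(a, b) \<in> ker_rel S \<phi>" using a b unfolding ker_rel_def by simp
  qed
qed

lemma fundamental_MP: "fundamental MP"
proof -
  have "mu MP = ker_rel MP id"
  proof (rule mu_eq_ker_rel)
    show "drc_closed MP" using drc_MP by (rule drc_closed_if_drc)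
    show "drc_hom MP MP id" unfolding drc_hom_def by simp
    show "inj_on id (projs MP)" by (rule inj_on_id)
    show "id ` drc_carrier MP \<subseteq> MC" by simp
    show "hat ` P \<subseteq> id ` drc_carrier MP" using hat_in_MC by auto
    fix a assume "a \<in> drc_carrier MP"
    then obtain r where "r \<in> P" "drc_R MP a = hat r"
      using MC_greatest_fst R_MP_eq by (metis MP_simps(1))
    then show "drc_R MP a \<in> projs MP" unfolding projs_MP by simp
  qed
  then show ?thesis unfolding fundamental_def ker_rel_def Id_on_def by auto
qed


section \<open>F(P) modulo mu is M(P)\<close>

abbreviation "FP \<equiv> Fdrc P th de"
abbreviation "FC \<equiv> (lists P - {[]}) // FR"

definition F_to_M :: "'p list set \<Rightarrow> ('p \<Rightarrow> 'p) \<times> ('p \<Rightarrow> 'p)" where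
  "F_to_M A = hpr (SOME u. u \<in> A)"

lemma FP_carrier [simp]: "drc_carrier FP = FC"
  unfolding Fdrc_def by simp

lemma equiv_FR: "equiv (lists P - {[]}) FR"
proof (rule equivI)
  show "FR \<subseteq> (lists P - {[]}) \<times> (lists P - {[]})"
  proof (rule subrelI)
    fix u v assume "(u, v) \<in> FR"
    then show "(u, v) \<in> (lists P - {[]}) \<times> (lists P - {[]})" using frel_words by simp
  qed
  show "refl_on (lists P - {[]}) FR"
    by (rule refl_onI) (simp add: frel_refl)
  show "sym FR" by (rule symI) (rule frel_sym)
  show "trans FR" by (rule transI) (rule frel_trans)
qed

lemma class_in_FC: "u \<in> lists P \<Longrightarrow> u \<noteq> [] \<Longrightarrow> FR `` {u} \<in> FC"
  by (rule quotientI) simp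

lemma FC_memD: "A \<in> FC \<Longrightarrow> u \<in> A \<Longrightarrow> A = FR `` {u} \<and> u \<in> lists P \<and> u \<noteq> []"
  using quotient_class_eq[OF equiv_FR] in_quotient_imp_subset[OF equiv_FR] by blast

lemma F_to_M_eq: "A \<in> FC \<Longrightarrow> u \<in> A \<Longrightarrow> F_to_M A = hpr u"
proof -
  assume A: "A \<in> FC" and u: "u \<in> A"
  have "(SOME u. u \<in> A) \<in> FR `` {u}"
    using some_in_quotient[OF equiv_FR A] FC_memD[OF A u] by simp
  then show ?thesis unfolding F_to_M_def using frel_hprod by simp
qed

lemma F_to_M_class: "u \<in> lists P \<Longrightarrow> u \<noteq> [] \<Longrightarrow> F_to_M (FR `` {u}) = hpr u"
  using F_to_M_eq class_in_FC equiv_class_self[OF equiv_FR] by simp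

lemma FC_fchain: "A \<in> FC \<Longrightarrow> \<exists>w. w \<in> A \<and> Fchain w"
proof -
  assume A: "A \<in> FC"
  obtain u where u: "u \<in> A" using some_in_quotient[OF equiv_FR A] by blast
  obtain w where w: "Fchain w" "(u, w) \<in> FR" using frel_fchain FC_memD[OF A u] by blast
  have "w \<in> A" using w(2) FC_memD[OF A u] by simp
  then show ?thesis using w(1) by blast
qed

lemma FP_mult_class:
  assumes A: "A \<in> FC" "u \<in> A" and B: "B \<in> FC" "v \<in> B"
  shows "drc_mult FP A B = FR `` {u @ v}"
proof -
  let ?u = "SOME u. u \<in> A" and ?v = "SOME v. v \<in> B"
  have "(u, ?u) \<in> FR" "(v, ?v) \<in> FR"
    using some_in_quotient[OF equiv_FR A(1)] some_in_quotient[OF equiv_FR B(1)]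
      FC_memD[OF A] FC_memD[OF B] by auto
  then have "(u @ v, ?u @ ?v) \<in> FR"
    using frel_append_right frel_append_left frel_trans frel_words by meson
  then have "FR `` {u @ v} = FR `` {?u @ ?v}" by (rule equiv_class_eq[OF equiv_FR])
  then show ?thesis unfolding Fdrc_def by simp
qed

lemma FP_D_class:
  assumes A: "A \<in> FC" "w \<in> A" "Fchain w"
  shows "drc_D FP A = FR `` {[hd w]}"
proof -
  define w' where "w' = (SOME w. w \<in> A \<and> Fchain w)"
  have w': "w' \<in> A" "Fchain w'"
    using someI_ex[OF FC_fchain[OF A(1)]] unfolding w'_def by auto
  have "hat (hd w) = hat (hd w')"
    using D_hprod[OF A(3)] D_hprod[OF w'(2)] F_to_M_eq[OF A(1)] A(2) w'(1) by metis
  then have "hd w = hd w'"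
    using inj_on_hat fchain_hd_last A(3) w'(2) unfolding inj_on_def by metis
  then show ?thesis unfolding Fdrc_def w'_def by simp
qed

lemma FP_R_class:
  assumes A: "A \<in> FC" "w \<in> A" "Fchain w"
  shows "drc_R FP A = FR `` {[last w]}"
proof -
  define w' where "w' = (SOME w. w \<in> A \<and> Fchain w)"
  have w': "w' \<in> A" "Fchain w'"
    using someI_ex[OF FC_fchain[OF A(1)]] unfolding w'_def by auto
  have "hat (last w) = hat (last w')"
    using R_hprod[OF A(3)] R_hprod[OF w'(2)] F_to_M_eq[OF A(1)] A(2) w'(1) by metis
  then have "last w = last w'"
    using inj_on_hat fchain_hd_last A(3) w'(2) unfolding inj_on_def by metis
  then show ?thesis unfolding Fdrc_def w'_def by simp
qed

lemma FP_D_R_in_singletons: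
  assumes "A \<in> FC"
  obtains p q where "p \<in> P" "q \<in> P" "drc_D FP A = FR `` {[p]}" "drc_R FP A = FR `` {[q]}"
    "drc_D MP (F_to_M A) = hat p" "drc_R MP (F_to_M A) = hat q"
proof -
  obtain w where w: "w \<in> A" "Fchain w" using FC_fchain[OF assms] by blast
  show ?thesis
  proof (rule that)
    show "hd w \<in> P" "last w \<in> P" using fchain_hd_last[OF w(2)] by blast+
    show "drc_D FP A = FR `` {[hd w]}" "drc_R FP A = FR `` {[last w]}"
      using FP_D_class[OF assms w] FP_R_class[OF assms w] .
    show "drc_D MP (F_to_M A) = hat (hd w)" "drc_R MP (F_to_M A) = hat (last w)"
      using F_to_M_eq[OF assms w(1)] D_hprod[OF w(2)] R_hprod[OF w(2)] by simp_all
  qed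
qed

lemma FP_mult_in_FC:
  assumes A: "A \<in> FC" and B: "B \<in> FC"
  obtains u v where "u \<in> lists P" "u \<noteq> []" "v \<in> lists P" "v \<noteq> []"
    "A = FR `` {u}" "B = FR `` {v}" "drc_mult FP A B = FR `` {u @ v}"
proof -
  obtain u v where uv: "u \<in> A" "v \<in> B" using some_in_quotient[OF equiv_FR] A B by blast
  show ?thesis
    using that FC_memD[OF A uv(1)] FC_memD[OF B uv(2)] FP_mult_class[OF A uv(1) B uv(2)] by blast
qed

lemma drc_closed_FP: "drc_closed FP"
  unfolding drc_closed_def FP_carrier
proof (intro conjI ballI)
  fix A B assume A: "A \<in> FC" and B: "B \<in> FC"
  obtain u v where "u \<in> lists P" "u \<noteq> []" "v \<in> lists P" "v \<noteq> []"
    "drc_mult FP A B = FR `` {u @ v}"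
    using FP_mult_in_FC[OF A B] by metis
  then show "drc_mult FP A B \<in> FC" using class_in_FC[of "u @ v"] by simp
next
  fix A assume A: "A \<in> FC"
  then obtain p q where "p \<in> P" "q \<in> P" "drc_D FP A = FR `` {[p]}" "drc_R FP A = FR `` {[q]}"
    by (rule FP_D_R_in_singletons)
  then show "drc_D FP A \<in> FC" "drc_R FP A \<in> FC" using class_in_FC by simp_all
qed

lemma drc_hom_F_to_M: "drc_hom FP MP F_to_M"
  unfolding drc_hom_def FP_carrier
proof (intro conjI ballI)
  fix A B assume A: "A \<in> FC" and B: "B \<in> FC"
  then obtain u v where u: "u \<in> lists P" "u \<noteq> []" and v: "v \<in> lists P" "v \<noteq> []"
    and classes: "A = FR `` {u}" "B = FR `` {v}" "drc_mult FP A B = FR `` {u @ v}"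
    by (rule FP_mult_in_FC)
  have "F_to_M (drc_mult FP A B) = hpr (u @ v)"
    using classes(3) F_to_M_class[of "u @ v"] u v by simp
  also have "\<dots> = mmult (F_to_M A) (F_to_M B)"
    using hprod_append[OF u v] F_to_M_class[OF u] F_to_M_class[OF v] classes(1,2) by simp
  finally show "F_to_M (drc_mult FP A B) = drc_mult MP (F_to_M A) (F_to_M B)" by simp
next
  fix A assume A: "A \<in> FC"
  then obtain p q where "p \<in> P" "q \<in> P" "drc_D FP A = FR `` {[p]}" "drc_R FP A = FR `` {[q]}"
    "drc_D MP (F_to_M A) = hat p" "drc_R MP (F_to_M A) = hat q"
    by (rule FP_D_R_in_singletons)
  then show "F_to_M (drc_D FP A) = drc_D MP (F_to_M A)" "F_to_M (drc_R FP A) = drc_R MP (F_to_M A)"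
    using F_to_M_class[of "[p]"] F_to_M_class[of "[q]"] by simp_all
qed

lemma F_to_M_image: "F_to_M ` FC = MC"
proof
  show "F_to_M ` FC \<subseteq> MC"
  proof
    fix a assume "a \<in> F_to_M ` FC"
    then obtain A where A: "A \<in> FC" "a = F_to_M A" by blast
    obtain u where "u \<in> A" using some_in_quotient[OF equiv_FR A(1)] by blast
    then show "a \<in> MC"
      using F_to_M_eq A FC_memD unfolding MC_eq_hprod_image by blast
  qed
  show "MC \<subseteq> F_to_M ` FC"
  proof
    fix a assume "a \<in> MC"
    then obtain u where "u \<in> lists P" "u \<noteq> []" "a = hpr u" unfolding MC_eq_hprod_image by blast
    then show "a \<in> F_to_M ` FC" using F_to_M_class class_in_FC by (metis image_eqI)
  qed
qed

lemma projs_FP: "projs FP = (\<lambda>x. FR `` {[x]}) ` P"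
proof
  show "projs FP \<subseteq> (\<lambda>x. FR `` {[x]}) ` P"
  proof
    fix X assume "X \<in> projs FP"
    then obtain A where A: "A \<in> FC" "X = drc_D FP A" unfolding projs_def by auto
    then obtain p where "p \<in> P" "drc_D FP A = FR `` {[p]}"
      using FP_D_R_in_singletons[OF A(1)] by metis
    then show "X \<in> (\<lambda>x. FR `` {[x]}) ` P" using A(2) by blast
  qed
  show "(\<lambda>x. FR `` {[x]}) ` P \<subseteq> projs FP"
  proof
    fix X assume "X \<in> (\<lambda>x. FR `` {[x]}) ` P"
    then obtain p where p: "p \<in> P" "X = FR `` {[p]}" by blast
    then have "X \<in> FC" "X = drc_D FP X"
      using class_in_FC FP_D_class[of X "[p]"] equiv_class_self[OF equiv_FR] by auto
    then show "X \<in> projs FP" unfolding projs_def by auto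
  qed
qed

lemma mu_FP: "mu FP = ker_rel FP F_to_M"
proof (rule mu_eq_ker_rel[OF drc_closed_FP drc_hom_F_to_M])
  show "F_to_M ` drc_carrier FP \<subseteq> MC" using F_to_M_image by simp
  show "hat ` P \<subseteq> F_to_M ` drc_carrier FP"
  proof
    fix a assume "a \<in> hat ` P"
    then obtain p where "p \<in> P" "a = hpr [p]" by (auto simp only: hprod.simps)
    then have "a = F_to_M (FR `` {[p]})" "FR `` {[p]} \<in> FC"
      using F_to_M_class[of "[p]"] class_in_FC[of "[p]"] by simp_all
    then show "a \<in> F_to_M ` drc_carrier FP" unfolding FP_carrier by blast
  qed
  show "inj_on F_to_M (projs FP)"
    unfolding projs_FP using inj_on_hat F_to_M_class by (auto simp: inj_on_def)
  fix A assume "A \<in> drc_carrier FP"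
  then obtain q where "q \<in> P" "drc_R FP A = FR `` {[q]}"
    using FP_D_R_in_singletons by (metis FP_carrier)
  then show "drc_R FP A \<in> projs FP" unfolding projs_FP by blast
qed

lemma MP_iso_quot_FP: "\<exists>f. drc_iso MP (quot FP (mu FP)) f"
proof -
  have "drc_iso (quot FP (mu FP)) MP (induced_map F_to_M)"
    unfolding mu_FP using drc_closed_FP drc_hom_F_to_M F_to_M_image
    by (intro quot_ker_rel_iso) simp_all
  moreover have "drc_closed (quot FP (mu FP))"
    unfolding mu_FP using equiv_ker_rel drc_closed_FP by (rule drc_closed_quot)
  ultimately show ?thesis by (blast intro: drc_iso_inv_into)
qed

end

section \<open>Uniqueness\<close>

locale drc_over_proj_algebra = proj_algebra P th de + drc_semigroup S
  for P :: "'p set" and th de :: "'p \<Rightarrow> 'p \<Rightarrow> 'p" and S :: "'b drc" +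
  fixes g :: "'p \<Rightarrow> 'b"
  assumes g_iso: "proj_alg_iso P th de (projs S) (thS S) (deS S) g"
begin

abbreviation "g_inv \<equiv> inv_into P g"

lemma g_bij: "bij_betw g P (projs S)"
  using g_iso unfolding proj_alg_iso_def by blast

lemma g_in_projs: "p \<in> P \<Longrightarrow> g p \<in> projs S"
  using g_bij bij_betwE by blast

lemma g_closed: "p \<in> P \<Longrightarrow> g p \<in> C"
  using g_in_projs projs_closed by blast

lemma g_inv_in: "e \<in> projs S \<Longrightarrow> g_inv e \<in> P"
  and g_g_inv: "e \<in> projs S \<Longrightarrow> g (g_inv e) = e"
  using g_bij by (metis bij_betw_imp_surj_on f_inv_into_f inv_into_into)+

lemma g_inv_g: "p \<in> P \<Longrightarrow> g_inv (g p) = p"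
  using g_bij bij_betw_imp_inj_on inv_into_f_f by metis

lemma g_th: "p \<in> P \<Longrightarrow> q \<in> P \<Longrightarrow> g (th p q) = R (m (g q) (g p))"
  using g_iso unfolding proj_alg_iso_def thS_def by blast

lemma g_de: "p \<in> P \<Longrightarrow> q \<in> P \<Longrightarrow> g (de p q) = D (m (g p) (g q))"
  using g_iso unfolding proj_alg_iso_def deS_def by blast

text \<open>S acts on its projections by e \<mapsto> R(e a) and e \<mapsto> D(a e); transported to P along g,
  this is a map from S to pairs of transformations of P.\<close>

definition proj_action :: "'b \<Rightarrow> ('p \<Rightarrow> 'p) \<times> ('p \<Rightarrow> 'p)" where
  "proj_action a = ((\<lambda>x\<in>P. g_inv (R (m (g x) a))), (\<lambda>x\<in>P. g_inv (D (m a (g x)))))"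

lemma proj_action_g: "p \<in> P \<Longrightarrow> proj_action (g p) = hat p"
  unfolding proj_action_def hatp_def
  by (auto intro!: restrict_ext simp: g_th[symmetric] g_de[symmetric] g_inv_g th_closed de_closed)

lemma proj_action_mult:
  assumes a: "a \<in> C" and b: "b \<in> C"
  shows "proj_action (m a b) = mmult (proj_action a) (proj_action b)"
proof -
  have fst_eq: "fst (mmult (proj_action a) (proj_action b)) x = g_inv (R (m (g x) (m a b)))"
    if x: "x \<in> P" for x
  proof -
    have e: "R (m (g x) a) \<in> projs S" using R_in_projs mult_closed g_closed x a by simp
    have "fst (mmult (proj_action a) (proj_action b)) x = g_inv (R (m (R (m (g x) a)) b))"
      using x g_inv_in[OF e] g_g_inv[OF e] by (simp add: mmult_fst proj_action_def)
    also have "\<dots> = g_inv (R (m (m (g x) a) b))"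
      using R_R_mult[of "m (g x) a" b] mult_closed g_closed x a b by simp
    also have "\<dots> = g_inv (R (m (g x) (m a b)))"
      using mult_assoc g_closed x a b by simp
    finally show ?thesis .
  qed
  have snd_eq: "snd (mmult (proj_action a) (proj_action b)) x = g_inv (D (m (m a b) (g x)))"
    if x: "x \<in> P" for x
  proof -
    have e: "D (m b (g x)) \<in> projs S" using D_in_projs mult_closed g_closed x b by simp
    have "snd (mmult (proj_action a) (proj_action b)) x = g_inv (D (m a (D (m b (g x)))))"
      using x g_inv_in[OF e] g_g_inv[OF e] by (simp add: mmult_snd proj_action_def)
    also have "\<dots> = g_inv (D (m a (m b (g x))))"
      using D_mult_D[of a "m b (g x)"] mult_closed g_closed x a b by simp
    also have "\<dots> = g_inv (D (m (m a b) (g x)))"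
      using mult_assoc g_closed x a b by simp
    finally show ?thesis .
  qed
  have ext: "fst (proj_action c) \<in> extensional P" "snd (proj_action c) \<in> extensional P"
    "fst (mmult (proj_action a) (proj_action b)) \<in> extensional P"
    "snd (mmult (proj_action a) (proj_action b)) \<in> extensional P" for c
    by (simp_all add: proj_action_def mmult_fst mmult_snd)
  have "fst (proj_action (m a b)) x = fst (mmult (proj_action a) (proj_action b)) x"
    "snd (proj_action (m a b)) x = snd (mmult (proj_action a) (proj_action b)) x"
    if "x \<in> P" for x
    using fst_eq[OF that] snd_eq[OF that] that by (simp_all add: proj_action_def)
  then show ?thesis using ext by (intro prod_eqI extensionalityI[where A = P]) blast+
qed

lemma proj_action_image:
  assumes "proj_generated S" shows "proj_action ` C = MC"
proof
  have C: "C = sgen m (projs S)" using assms unfolding proj_generated_def .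
  show "proj_action ` C \<subseteq> MC"
  proof
    fix c assume "c \<in> proj_action ` C"
    then obtain a where a: "a \<in> sgen m (projs S)" "c = proj_action a" using C by blast
    have "proj_action a \<in> MC" using a(1)
    proof (induction rule: sgen.induct)
      case (sgen_base e)
      then show ?case using g_g_inv[of e] g_inv_in[of e] proj_action_g hat_in_MC by metis
    next
      case (sgen_mult a b)
      then show ?case using proj_action_mult mmult_in_MC C by simp
    qed
    then show "c \<in> MC" using a(2) by simp
  qed
  show "MC \<subseteq> proj_action ` C"
  proof
    fix c assume "c \<in> MC"
    then show "c \<in> proj_action ` C"
    proof (induction rule: sgen.induct)
      case (sgen_base c)
      then obtain p where "p \<in> P" "c = hat p" by blast
      then show ?case using proj_action_g g_closed by (metis image_eqI)
    next
      case (sgen_mult c d)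
      then obtain a b where "a \<in> C" "b \<in> C" "c = proj_action a" "d = proj_action b" by blast
      then show ?case using proj_action_mult mult_closed by (metis image_eqI)
    qed
  qed
qed

lemma greatest_value_proj_action_snd:
  assumes a: "a \<in> C" shows "greatest_value (snd (proj_action a)) (g_inv (D a))"
  unfolding greatest_value_def
proof
  have "R a \<in> projs S" using R_in_projs a by simp
  then have "snd (proj_action a) (g_inv (R a)) = g_inv (D a)"
    using g_inv_in g_g_inv mult_R_self a by (simp add: proj_action_def)
  then show "g_inv (D a) \<in> snd (proj_action a) ` P"
    using g_inv_in[OF \<open>R a \<in> projs S\<close>] by (metis image_eqI)
  show "\<forall>x\<in>P. snd (proj_action a) x \<preceq> g_inv (D a)"
  proof
    fix x assume x: "x \<in> P"
    let ?e = "D (m a (g x))"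
    have e: "?e \<in> projs S" "D a \<in> projs S" using D_in_projs mult_closed g_closed x a by auto
    have "g (de (g_inv (D a)) (g_inv ?e)) = D (m (D a) ?e)"
      using g_de g_inv_in g_g_inv e by simp
    also have "\<dots> = ?e" using D_mult_below D_proj e(1) a g_closed[OF x] by simp
    finally have "de (g_inv (D a)) (g_inv ?e) = g_inv ?e"
      using g_inv_g de_closed g_inv_in e by metis
    then show "snd (proj_action a) x \<preceq> g_inv (D a)"
      using x unfolding proj_le_def proj_action_def by simp
  qed
qed

lemma greatest_value_proj_action_fst:
  assumes a: "a \<in> C" shows "greatest_value (fst (proj_action a)) (g_inv (R a))"
  unfolding greatest_value_def
proof
  have "D a \<in> projs S" using D_in_projs a by simp
  then have "fst (proj_action a) (g_inv (D a)) = g_inv (R a)"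
    using g_inv_in g_g_inv D_mult_self a by (simp add: proj_action_def)
  then show "g_inv (R a) \<in> fst (proj_action a) ` P"
    using g_inv_in[OF \<open>D a \<in> projs S\<close>] by (metis image_eqI)
  show "\<forall>x\<in>P. fst (proj_action a) x \<preceq> g_inv (R a)"
  proof
    fix x assume x: "x \<in> P"
    let ?e = "R (m (g x) a)"
    have e: "?e \<in> projs S" "R a \<in> projs S" using R_in_projs mult_closed g_closed x a by auto
    have "g (th (g_inv (R a)) (g_inv ?e)) = R (m ?e (R a))"
      using g_th g_inv_in g_g_inv e by simp
    also have "\<dots> = ?e" using R_mult_below R_proj e(1) a g_closed[OF x] by simp
    finally have "th (g_inv (R a)) (g_inv ?e) = g_inv ?e"
      using g_inv_g th_closed g_inv_in e by metis
    then show "fst (proj_action a) x \<preceq> g_inv (R a)"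
      using x proj_le_iff_th g_inv_in e unfolding proj_action_def by simp
  qed
qed

lemma drc_hom_proj_action:
  assumes "proj_generated S" shows "drc_hom S MP proj_action"
  unfolding drc_hom_def MP_simps
proof (intro conjI ballI)
  fix a b assume "a \<in> C" "b \<in> C"
  then show "proj_action (m a b) = mmult (proj_action a) (proj_action b)"
    by (rule proj_action_mult)
next
  fix a assume a: "a \<in> C"
  then have in_MC: "proj_action a \<in> MC" using proj_action_image[OF assms] by blast
  show "proj_action (D a) = drc_D MP (proj_action a)"
    using D_MP_eq[OF in_MC greatest_value_proj_action_snd[OF a]] proj_action_g g_inv_in g_g_inv
      D_in_projs a by metis
  show "proj_action (R a) = drc_R MP (proj_action a)"
    using R_MP_eq[OF in_MC greatest_value_proj_action_fst[OF a]] proj_action_g g_inv_in g_g_inv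
      R_in_projs a by metis
qed

lemma inj_on_proj_action_projs: "inj_on proj_action (projs S)"
proof (rule inj_onI)
  fix e f assume e: "e \<in> projs S" and f: "f \<in> projs S" and eq: "proj_action e = proj_action f"
  then have "hat (g_inv e) = hat (g_inv f)" using proj_action_g g_inv_in g_g_inv by metis
  then have "g_inv e = g_inv f" using inj_on_hat g_inv_in e f unfolding inj_on_def by blast
  then show "e = f" using g_g_inv e f by metis
qed

lemma drc_iso_proj_action:
  assumes gen: "proj_generated S" and fund: "fundamental S"
  shows "drc_iso S MP proj_action"
proof -
  have "mu S = ker_rel S proj_action"
  proof (rule mu_eq_ker_rel)
    show "drc_closed S" using drc by (rule drc_closed_if_drc)
    show "drc_hom S MP proj_action" using gen by (rule drc_hom_proj_action)
    show "proj_action ` C \<subseteq> MC" "hat ` P \<subseteq> proj_action ` C"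
      using proj_action_image[OF gen] hat_in_MC by auto
    show "inj_on proj_action (projs S)" by (rule inj_on_proj_action_projs)
    show "\<And>a. a \<in> C \<Longrightarrow> R a \<in> projs S" by (rule R_in_projs)
  qed
  then have "inj_on proj_action C"
    using fund unfolding fundamental_def ker_rel_def by (auto simp: inj_on_def Id_on_iff)
  then show ?thesis
    unfolding drc_iso_iff_hom_bij bij_betw_def
    using drc_hom_proj_action[OF gen] proj_action_image[OF gen] by simp
qed

end

theorem theorem8p19:
  fixes P :: "'p set" and th de :: "'p \<Rightarrow> 'p \<Rightarrow> 'p"
  assumes "proj_alg P th de"
  shows "drc (Mdrc P th de) \<and> proj_generated (Mdrc P th de) \<and> fundamental (Mdrc P th de) \<and>
    (\<exists>g. proj_alg_iso P th de (projs (Mdrc P th de)) (thS (Mdrc P th de)) (deS (Mdrc P th de)) g) \<and>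
    (\<exists>f. drc_iso (Mdrc P th de) (quot (Fdrc P th de) (mu (Fdrc P th de))) f) \<and>
    (\<forall>S :: 'b drc. drc S \<and> proj_generated S \<and> fundamental S \<and>
        (\<exists>g. proj_alg_iso P th de (projs S) (thS S) (deS S) g)
        \<longrightarrow> (\<exists>f. drc_iso S (Mdrc P th de) f))"
proof -
  interpret proj_algebra P th de using assms by unfold_locales
  have unique: "\<exists>f. drc_iso S (Mdrc P th de) f"
    if "drc S" "proj_generated S" "fundamental S" "proj_alg_iso P th de (projs S) (thS S) (deS S) g"
    for S :: "'b drc" and g
  proof -
    interpret drc_over_proj_algebra P th de S g
      using assms that by unfold_locales
    show ?thesis using drc_iso_proj_action that by blast
  qed
  show ?thesis
    using drc_MP proj_generated_MP fundamental_MP proj_alg_iso_hat MP_iso_quot_FP unique by blast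
qed

end
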